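(* Under the setting of Theorem 7 (i.i.d. $X_i$ with mean $\mu_0$, $\|X_1\|\le\tau$ a.s., $c_1j^{-\beta}\le\lambda_j\le c_2j^{-\beta}$ with $\beta>1$, $\mu_0\in\mathcal{H}_{C^\eta}$, and the private estimators FRL and ICLP-QR as defined there), fix $\epsilon>0$. (1) (FRL) If $\eta>1+\beta^{-1}$ and $M=M_n$ are integers with $a\,n^{1/(\eta\beta)}\le M_n\le b\,n^{1/3}$ for constants $a,b>0$, then $\sup_n n\,\mathbb{E}\|\tilde\mu-\mu_0\|_{\mathbb{H}}^2<\infty$. (2) (ICLP-QR) If $\eta\ge1+2\beta^{-1}$ and $\psi=\psi_n\in(0,1]$ satisfies $a(n\epsilon^2)^{-\eta\beta/(\beta+2)}\le\psi_n\le b\,n^{-1}$ for constants $a,b>0$, then $\sup_n n\,\mathbb{E}\|\tilde\mu-\mu_0\|_{\mathbb{H}}^2<\infty$. Moreover, if $\eta>1+2\beta^{-1}$ and $\psi_n=n^{-1}$, then $n\,\mathbb{E}\|\tilde\mu-\hat\mu^{QR}\|_{\mathbb{H}}^2\to0$ as $n\to\infty$.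
   Context: $\mathbb{H}$ is a real separable infinite-dimensional Hilbert space; $C$ a covariance operator with eigenvalues $\lambda_1\ge\lambda_2\ge\dots>0$ and orthonormal eigenbasis $\{\phi_j\}$; $h_j=\langle h,\phi_j\rangle$; $\|h\|_{C^\eta}=(\sum_jh_j^2/\lambda_j^\eta)^{1/2}$, $\mathcal{H}_{C^\eta}=\{h:\|h\|_{C^\eta}<\infty\}$. FRL estimator: $\tilde\mu=\sum_{j=1}^M(\langle\bar X,\phi_j\rangle+W_j)\phi_j$ with $W_j$ i.i.d. with density $\frac1{2b}e^{-|w|/b}$, $b=2M\tau/(n\epsilon)$. ICLP-QR estimator: $\hat\mu^{QR}=\sum_j\frac{\lambda_j^\eta}{\lambda_j^\eta+\psi}\langle\bar X,\phi_j\rangle\phi_j$ and $\tilde\mu=\hat\mu^{QR}+\sigma Z$ with $\sigma=\sqrt2\Delta_{QR}/\epsilon$, $\Delta_{QR}=\frac{2\tau}{n}\sum_j\frac{\lambda_j^{\eta-1/2}}{\lambda_j^\eta+\psi}$, and $Z=\sum_j\sqrt{\lambda_j}Z_j\phi_j$ with $Z_j$ i.i.d. Laplace of mean 0 and variance 1, independent of the data. $\bar X=\frac1n\sum_iX_i$. *)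

theory Defs
  imports "HOL-Probability.Probability"
begin

text \<open>Laplace density with mean 0 and scale s: exp(-|x|/s)/(2s).
  Scale 1/sqrt 2 gives variance 1.\<close>
definition laplace_density :: "real \<Rightarrow> real \<Rightarrow> real" where
  "laplace_density s x = exp (- \<bar>x\<bar> / s) / (2 * s)"

text \<open>Orthonormal basis of the Hilbert space, indexed by nat (index j here = index j+1 in the paper).\<close>
definition orthonormal_basis :: "(nat \<Rightarrow> 'a::real_inner) \<Rightarrow> bool" where
  "orthonormal_basis \<phi> \<longleftrightarrow>
     (\<forall>i j. \<phi> i \<bullet> \<phi> j = (if i = j then 1 else 0)) \<and>
     (\<forall>h. (\<lambda>N. \<Sum>j<N. (h \<bullet> \<phi> j) *\<^sub>R \<phi> j) \<longlonglongrightarrow> h)"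

definition in_H_C_pow :: "(nat \<Rightarrow> real) \<Rightarrow> (nat \<Rightarrow> 'a::real_inner) \<Rightarrow> real \<Rightarrow> 'a \<Rightarrow> bool" where
  "in_H_C_pow lam \<phi> \<eta> h \<longleftrightarrow> summable (\<lambda>j. (h \<bullet> \<phi> j)\<^sup>2 / lam j powr \<eta>)"

definition Xbar :: "(nat \<Rightarrow> 'w \<Rightarrow> 'a::real_normed_vector) \<Rightarrow> nat \<Rightarrow> 'w \<Rightarrow> 'a" where
  "Xbar X n \<omega> = (1 / real n) *\<^sub>R (\<Sum>i<n. X i \<omega>)"

text \<open>FRL estimator with truncation level Mn; W0 are standard (scale 1) Laplace variables,
  so b * W0 j has density exp(-|w|/b)/(2b) with b = 2 Mn tau/(n eps).\<close>
definition frl_est :: "(nat \<Rightarrow> 'a::real_inner) \<Rightarrow> real \<Rightarrow> real \<Rightarrow> (nat \<Rightarrow> 'w \<Rightarrow> 'a)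
    \<Rightarrow> (nat \<Rightarrow> 'w \<Rightarrow> real) \<Rightarrow> nat \<Rightarrow> nat \<Rightarrow> 'w \<Rightarrow> 'a" where
  "frl_est \<phi> \<tau> \<epsilon> X W0 n Mn \<omega> =
     (\<Sum>j<Mn. ((Xbar X n \<omega> \<bullet> \<phi> j) + (2 * real Mn * \<tau> / (real n * \<epsilon>)) * W0 j \<omega>) *\<^sub>R \<phi> j)"

definition qr_est :: "(nat \<Rightarrow> real) \<Rightarrow> (nat \<Rightarrow> 'a::{real_inner}) \<Rightarrow> real \<Rightarrow> real
    \<Rightarrow> (nat \<Rightarrow> 'w \<Rightarrow> 'a) \<Rightarrow> nat \<Rightarrow> 'w \<Rightarrow> 'a" where
  "qr_est lam \<phi> \<eta> \<psi> X n \<omega> =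
     (\<Sum>j. (lam j powr \<eta> / (lam j powr \<eta> + \<psi>) * (Xbar X n \<omega> \<bullet> \<phi> j)) *\<^sub>R \<phi> j)"

definition delta_qr :: "(nat \<Rightarrow> real) \<Rightarrow> real \<Rightarrow> real \<Rightarrow> real \<Rightarrow> nat \<Rightarrow> real" where
  "delta_qr lam \<eta> \<psi> \<tau> n =
     2 * \<tau> / real n * (\<Sum>j. lam j powr (\<eta> - 1/2) / (lam j powr \<eta> + \<psi>))"

definition iclp_noise :: "(nat \<Rightarrow> real) \<Rightarrow> (nat \<Rightarrow> 'a::real_inner) \<Rightarrow> (nat \<Rightarrow> 'w \<Rightarrow> real) \<Rightarrow> 'w \<Rightarrow> 'a" where
  "iclp_noise lam \<phi> Z \<omega> = (\<Sum>j. (sqrt (lam j) * Z j \<omega>) *\<^sub>R \<phi> j)"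

definition iclp_qr_est :: "(nat \<Rightarrow> real) \<Rightarrow> (nat \<Rightarrow> 'a::real_inner) \<Rightarrow> real \<Rightarrow> real \<Rightarrow> real \<Rightarrow> real
    \<Rightarrow> (nat \<Rightarrow> 'w \<Rightarrow> 'a) \<Rightarrow> (nat \<Rightarrow> 'w \<Rightarrow> real) \<Rightarrow> nat \<Rightarrow> 'w \<Rightarrow> 'a" where
  "iclp_qr_est lam \<phi> \<eta> \<psi> \<tau> \<epsilon> X Z n \<omega> =
     qr_est lam \<phi> \<eta> \<psi> X n \<omega> + (sqrt 2 * delta_qr lam \<eta> \<psi> \<tau> n / \<epsilon>) *\<^sub>R iclp_noise lam \<phi> Z \<omega>"

definition indep_processes :: "'w measure \<Rightarrow> (nat \<Rightarrow> 'w \<Rightarrow> 'b::topological_space)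
    \<Rightarrow> (nat \<Rightarrow> 'w \<Rightarrow> 'c::topological_space) \<Rightarrow> bool" where
  "indep_processes M X Y \<longleftrightarrow>
     prob_space.indep_set M
       (sets (vimage_algebra (space M) (\<lambda>\<omega> i. X i \<omega>) (Pi\<^sub>M UNIV (\<lambda>_. borel))))
       (sets (vimage_algebra (space M) (\<lambda>\<omega> j. Y j \<omega>) (Pi\<^sub>M UNIV (\<lambda>_. borel))))"

end

theory Submission
  imports Defs
begin

(* Expanded in the eigenbasis, the squared error of each estimator is bounded, up to constant
   factors, by three terms: the error of the sample mean, of order tau^2/n by independence; a bias
   controlled by the C^eta-regularity of mu0 (lam_M^eta for truncation at M, psi for quasi-ridge
   shrinkage); and the energy of the privacy noise. For FRL the noise costs M^3 tau^2/(n eps)^2 in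
   expectation. For ICLP-QR it costs sigma^2 * sum lam_j, and under polynomial decay of the spectrum
   the sensitivity sum  sum_j lam_j^(eta-1/2) / (lam_j^eta + psi)  is O(psi^(-(1+beta/2)/(beta eta))).
   The admissible choices of M_n and psi_n make each term O(1/n); with psi_n = 1/n the noise term
   alone is O(n^((2+beta)/(beta eta) - 1)) = o(1/n) once eta > 1 + 2/beta. *)

section \<open>Orthonormal expansions\<close>

lemma orthonormal_basis_inner:
  "orthonormal_basis \<phi> \<Longrightarrow> \<phi> i \<bullet> \<phi> j = (if i = j then 1 else 0)"
  unfolding orthonormal_basis_def by blast

lemma orthonormal_basis_expansion:
  "orthonormal_basis \<phi> \<Longrightarrow> (\<lambda>N. \<Sum>j<N. (h \<bullet> \<phi> j) *\<^sub>R \<phi> j) \<longlonglongrightarrow> h"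
  unfolding orthonormal_basis_def by blast

lemma abs_inner_orthonormal_le:
  assumes "orthonormal_basis \<phi>"
  shows "\<bar>v \<bullet> \<phi> j\<bar> \<le> norm v"
proof -
  have "norm (\<phi> j) = 1"
    using orthonormal_basis_inner[OF assms, of j j] by (simp add: norm_eq_sqrt_inner)
  then show ?thesis using Cauchy_Schwarz_ineq2[of v "\<phi> j"] by simp
qed

lemma inner_sum_orthonormal:
  assumes "orthonormal_basis \<phi>" "finite A"
  shows "(\<Sum>j\<in>A. c j *\<^sub>R \<phi> j) \<bullet> \<phi> k = (if k \<in> A then c k else 0)"
proof -
  have "(\<Sum>j\<in>A. c j *\<^sub>R \<phi> j) \<bullet> \<phi> k = (\<Sum>j\<in>A. c j * (if j = k then 1 else 0))"
    by (simp add: inner_sum_left orthonormal_basis_inner[OF assms(1)])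
  also have "\<dots> = (if k \<in> A then c k else 0)"
    using assms(2) by (simp add: if_distrib sum.delta cong: if_cong)
  finally show ?thesis .
qed

lemma norm_sum_orthonormal_sq:
  assumes "orthonormal_basis \<phi>" "finite A"
  shows "(norm (\<Sum>j\<in>A. c j *\<^sub>R \<phi> j))\<^sup>2 = (\<Sum>j\<in>A. (c j)\<^sup>2)"
proof -
  have "(norm (\<Sum>j\<in>A. c j *\<^sub>R \<phi> j))\<^sup>2 = (\<Sum>k\<in>A. c k * ((\<Sum>j\<in>A. c j *\<^sub>R \<phi> j) \<bullet> \<phi> k))"
    by (simp add: power2_norm_eq_inner inner_sum_right)
  also have "\<dots> = (\<Sum>k\<in>A. (c k)\<^sup>2)"
    by (intro sum.cong refl) (simp add: inner_sum_orthonormal[OF assms] power2_eq_square)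
  finally show ?thesis .
qed

lemma parseval_sums:
  assumes "orthonormal_basis \<phi>"
  shows "(\<lambda>j. (h \<bullet> \<phi> j)\<^sup>2) sums (norm h)\<^sup>2"
proof -
  have "(\<lambda>N. (norm (\<Sum>j<N. (h \<bullet> \<phi> j) *\<^sub>R \<phi> j))\<^sup>2) \<longlonglongrightarrow> (norm h)\<^sup>2"
    by (intro tendsto_intros orthonormal_basis_expansion[OF assms])
  then show ?thesis unfolding sums_def by (simp add: norm_sum_orthonormal_sq[OF assms])
qed

lemma summable_coeffs_sq:
  "orthonormal_basis \<phi> \<Longrightarrow> summable (\<lambda>j. (h \<bullet> \<phi> j)\<^sup>2)"
  using parseval_sums sums_summable by blast

lemma parseval_ennreal:
  assumes "orthonormal_basis \<phi>"
  shows "ennreal ((norm h)\<^sup>2) = (\<Sum>j. ennreal ((h \<bullet> \<phi> j)\<^sup>2))"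
proof -
  have "(\<lambda>j. ennreal ((h \<bullet> \<phi> j)\<^sup>2)) sums ennreal ((norm h)\<^sup>2)"
    using parseval_sums[OF assms, of h] by (subst sums_ennreal) auto
  then show ?thesis by (simp add: sums_iff)
qed

lemma norm_sq_le_suminf_of_coeffs:
  assumes "orthonormal_basis \<phi>" "\<And>k. (v \<bullet> \<phi> k)\<^sup>2 \<le> f k" "summable f"
  shows "(norm v)\<^sup>2 \<le> (\<Sum>k. f k)"
  using parseval_sums[OF assms(1), of v] suminf_le[OF assms(2) summable_coeffs_sq[OF assms(1)] assms(3)]
  by (simp add: sums_iff)

lemma
  fixes \<phi> :: "nat \<Rightarrow> 'a::{real_inner,banach}"
  assumes onb: "orthonormal_basis \<phi>" and sq: "summable (\<lambda>j. (c j)\<^sup>2)"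
  shows summable_orthonormal_series: "summable (\<lambda>j. c j *\<^sub>R \<phi> j)"
    and inner_orthonormal_series: "(\<Sum>j. c j *\<^sub>R \<phi> j) \<bullet> \<phi> k = c k"
proof -
  show sm: "summable (\<lambda>j. c j *\<^sub>R \<phi> j)"
    unfolding summable_Cauchy
  proof (intro allI impI)
    fix e :: real assume "e > 0"
    then obtain N where N: "\<And>m n. m \<ge> N \<Longrightarrow> norm (\<Sum>j\<in>{m..<n}. (c j)\<^sup>2) < e\<^sup>2"
      using sq[unfolded summable_Cauchy] by (metis zero_less_power)
    show "\<exists>N. \<forall>m\<ge>N. \<forall>n. norm (\<Sum>j\<in>{m..<n}. c j *\<^sub>R \<phi> j) < e"
    proof (intro exI allI impI)
      fix m n assume "m \<ge> N"
      have "(norm (\<Sum>j\<in>{m..<n}. c j *\<^sub>R \<phi> j))\<^sup>2 = (\<Sum>j\<in>{m..<n}. (c j)\<^sup>2)"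
        by (simp add: norm_sum_orthonormal_sq[OF onb])
      also have "\<dots> < e\<^sup>2" using N[OF \<open>m \<ge> N\<close>, of n] by simp
      finally show "norm (\<Sum>j\<in>{m..<n}. c j *\<^sub>R \<phi> j) < e"
        using \<open>e > 0\<close> by (meson norm_ge_zero power_less_imp_less_base less_imp_le)
    qed
  qed
  have "(\<lambda>j. (c j *\<^sub>R \<phi> j) \<bullet> \<phi> k) sums ((\<Sum>j. c j *\<^sub>R \<phi> j) \<bullet> \<phi> k)"
    by (intro bounded_linear.sums[OF bounded_linear_inner_left] summable_sums sm)
  moreover have "(\<lambda>j. (c j *\<^sub>R \<phi> j) \<bullet> \<phi> k) = (\<lambda>j. if j = k then c j else 0)"
    by (auto simp: orthonormal_basis_inner[OF onb])
  ultimately show "(\<Sum>j. c j *\<^sub>R \<phi> j) \<bullet> \<phi> k = c k"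
    using sums_single[of k c] sums_unique2 by metis
qed

lemma norm_orthonormal_series_sq:
  fixes \<phi> :: "nat \<Rightarrow> 'a::{real_inner,banach}"
  assumes "orthonormal_basis \<phi>" "summable (\<lambda>j. (c j)\<^sup>2)"
  shows "(norm (\<Sum>j. c j *\<^sub>R \<phi> j))\<^sup>2 = (\<Sum>j. (c j)\<^sup>2)"
  using parseval_sums[OF assms(1), of "\<Sum>j. c j *\<^sub>R \<phi> j"]
  by (simp add: inner_orthonormal_series[OF assms] sums_iff)

lemma nn_integral_norm_sq_parseval:
  fixes V :: "'w \<Rightarrow> 'a::{real_inner, second_countable_topology}"
  assumes "orthonormal_basis \<phi>" and [measurable]: "V \<in> borel_measurable M"
  shows "(\<integral>\<^sup>+\<omega>. ennreal ((norm (V \<omega>))\<^sup>2) \<partial>M) = (\<Sum>j. \<integral>\<^sup>+\<omega>. ennreal ((V \<omega> \<bullet> \<phi> j)\<^sup>2) \<partial>M)"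
  by (simp add: parseval_ennreal[OF assms(1)] nn_integral_suminf)

section \<open>The sample mean\<close>

lemma (in prob_space) integral_sum_sq_indep_centered:
  fixes Y :: "nat \<Rightarrow> 'a \<Rightarrow> real"
  assumes ind: "indep_vars (\<lambda>_. borel) Y UNIV"
    and int: "\<And>i. integrable M (Y i)" and int2: "\<And>i k. integrable M (\<lambda>\<omega>. Y i \<omega> * Y k \<omega>)"
    and mean: "\<And>i. (\<integral>\<omega>. Y i \<omega> \<partial>M) = 0"
  shows "(\<integral>\<omega>. (\<Sum>i<n. Y i \<omega>)\<^sup>2 \<partial>M) = (\<Sum>i<n. \<integral>\<omega>. (Y i \<omega>)\<^sup>2 \<partial>M)"
proof -
  have cross: "(\<integral>\<omega>. Y i \<omega> * Y k \<omega> \<partial>M) = 0" if "i \<noteq> k" for i k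
  proof -
    have "indep_vars (\<lambda>_. borel) Y (insert i {k})"
      by (rule indep_vars_subset[OF ind]) auto
    from indep_vars_sum[OF _ _ this] that
    have "indep_var borel (Y i) borel (Y k)" by simp
    from indep_var_lebesgue_integral[OF this int int] show ?thesis by (simp add: mean)
  qed
  have "(\<integral>\<omega>. (\<Sum>i<n. Y i \<omega>)\<^sup>2 \<partial>M) = (\<Sum>i<n. \<Sum>k<n. \<integral>\<omega>. Y i \<omega> * Y k \<omega> \<partial>M)"
    by (simp add: power2_eq_square sum_product int2)
  also have "\<dots> = (\<Sum>i<n. \<Sum>k<n. if k = i then \<integral>\<omega>. (Y i \<omega>)\<^sup>2 \<partial>M else 0)"
    by (intro sum.cong refl) (auto simp: cross power2_eq_square)
  finally show ?thesis by simp
qed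

lemma (in finite_measure) integrable_mult_of_AE_bounded:
  fixes f g :: "'a \<Rightarrow> real"
  assumes "f \<in> borel_measurable M" "g \<in> borel_measurable M"
    and "AE \<omega> in M. \<bar>f \<omega>\<bar> \<le> c" "AE \<omega> in M. \<bar>g \<omega>\<bar> \<le> c"
  shows "integrable M (\<lambda>\<omega>. f \<omega> * g \<omega>)"
proof (rule Bochner_Integration.integrable_bound[OF integrable_const[of "c * c"]])
  show "AE \<omega> in M. norm (f \<omega> * g \<omega>) \<le> norm (c * c)"
    using assms(3,4)
  proof eventually_elim
    case (elim \<omega>)
    then have "0 \<le> c" using abs_ge_zero[of "f \<omega>"] by linarith
    then have "\<bar>f \<omega>\<bar> * \<bar>g \<omega>\<bar> \<le> c * c" using elim by (intro mult_mono) auto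
    then show ?case by (simp add: abs_mult)
  qed
qed (use assms in auto)

locale bounded_iid_sample = prob_space M for M :: "'w measure" +
  fixes X :: "nat \<Rightarrow> 'w \<Rightarrow> 'a::{real_inner, banach, second_countable_topology}"
    and \<mu>0 :: 'a and \<tau> :: real and \<phi> :: "nat \<Rightarrow> 'a"
  assumes X_measurable[measurable]: "\<And>i. X i \<in> borel_measurable M"
    and X_indep: "indep_vars (\<lambda>_. borel) X UNIV"
    and X_ident: "\<And>i. distr M borel (X i) = distr M borel (X 0)"
    and X_integrable_0: "integrable M (X 0)"
    and X_integral_0: "(\<integral>\<omega>. X 0 \<omega> \<partial>M) = \<mu>0"
    and X_bounded_0: "AE \<omega> in M. norm (X 0 \<omega>) \<le> \<tau>"
    and onb: "orthonormal_basis \<phi>"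
begin

lemma X_bounded: "AE \<omega> in M. norm (X i \<omega>) \<le> \<tau>"
proof -
  have "AE x in distr M borel (X i). norm x \<le> \<tau>"
    using X_bounded_0 by (subst X_ident, subst AE_distr_iff) auto
  then show ?thesis by (subst (asm) AE_distr_iff) auto
qed

lemma X_integrable: "integrable M (X i)"
proof -
  have id: "(\<lambda>x. x) \<in> borel_measurable borel" by simp
  have "integrable (distr M borel (X 0)) (\<lambda>x. x)"
    using integrable_distr_eq[OF X_measurable id] X_integrable_0 by (simp only:)
  then have "integrable (distr M borel (X i)) (\<lambda>x. x)" by (simp only: X_ident[of i])
  then show ?thesis using integrable_distr_eq[OF X_measurable id] by (simp only:)
qed

lemma X_integral: "(\<integral>\<omega>. X i \<omega> \<partial>M) = \<mu>0"
proof -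
  have id: "(\<lambda>x. x) \<in> borel_measurable borel" by simp
  have "(\<integral>\<omega>. X i \<omega> \<partial>M) = integral\<^sup>L (distr M borel (X i)) (\<lambda>x. x)"
    using integral_distr[OF X_measurable id] by (simp only:)
  also have "\<dots> = integral\<^sup>L (distr M borel (X 0)) (\<lambda>x. x)" by (simp only: X_ident[of i])
  also have "\<dots> = \<mu>0" using integral_distr[OF X_measurable id] X_integral_0 by (simp only:)
  finally show ?thesis .
qed

lemma norm_mean_le: "norm \<mu>0 \<le> \<tau>"
proof -
  have "norm \<mu>0 \<le> (\<integral>\<omega>. norm (X 0 \<omega>) \<partial>M)" using integral_norm_bound X_integral_0 by metis
  also have "\<dots> \<le> (\<integral>\<omega>. \<tau> \<partial>M)"
    by (rule integral_mono_AE) (use X_bounded_0 X_integrable in auto)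
  finally show ?thesis by (simp add: prob_space)
qed

lemma X_centered_bounded: "AE \<omega> in M. norm (X i \<omega> - \<mu>0) \<le> 2 * \<tau>"
  using X_bounded[of i]
proof eventually_elim
  case (elim \<omega>)
  then show ?case using norm_triangle_ineq4[of "X i \<omega>" \<mu>0] norm_mean_le by linarith
qed

lemma sample_mean_coeff_mse:
  assumes n: "n \<ge> 1"
  shows "(\<integral>\<^sup>+\<omega>. ennreal (((Xbar X n \<omega> - \<mu>0) \<bullet> \<phi> j)\<^sup>2) \<partial>M)
    = ennreal (1 / (real n)\<^sup>2) * (\<Sum>i<n. \<integral>\<^sup>+\<omega>. ennreal (((X i \<omega> - \<mu>0) \<bullet> \<phi> j)\<^sup>2) \<partial>M)"
proof -
  define Y where "Y i \<omega> = (X i \<omega> - \<mu>0) \<bullet> \<phi> j" for i \<omega>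
  have Y_bounded: "AE \<omega> in M. \<bar>Y i \<omega>\<bar> \<le> 2 * \<tau>" for i
    using X_centered_bounded[of i]
    by eventually_elim (metis Y_def abs_inner_orthonormal_le[OF onb] order_trans)
  have Y_integrable: "integrable M (Y i)" for i
    unfolding Y_def by (intro integrable_inner_left Bochner_Integration.integrable_diff X_integrable) auto
  have Y_prod_integrable: "integrable M (\<lambda>\<omega>. Y i \<omega> * Y k \<omega>)" for i k
    by (rule integrable_mult_of_AE_bounded[OF _ _ Y_bounded Y_bounded]) (auto simp: Y_def)
  have Y_mean: "(\<integral>\<omega>. Y i \<omega> \<partial>M) = 0" for i
  proof -
    have "(\<integral>\<omega>. Y i \<omega> \<partial>M) = (\<integral>\<omega>. (X i \<omega> - \<mu>0) \<partial>M) \<bullet> \<phi> j"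
      unfolding Y_def by (intro integral_inner_left Bochner_Integration.integrable_diff X_integrable) auto
    then show ?thesis using X_integrable[of i] by (simp add: X_integral prob_space)
  qed
  have Y_indep: "indep_vars (\<lambda>_. borel) Y UNIV"
    unfolding Y_def by (rule indep_vars_compose2[OF X_indep]) auto
  have coeff: "(Xbar X n \<omega> - \<mu>0) \<bullet> \<phi> j = (\<Sum>i<n. Y i \<omega>) / real n" for \<omega>
    using n by (simp add: Xbar_def Y_def inner_diff_left inner_sum_left sum_subtractf field_simps)
  have sq_integrable: "integrable M (\<lambda>\<omega>. (Y i \<omega>)\<^sup>2)" for i
    using Y_prod_integrable[of i i] by (simp add: power2_eq_square)
  have sq_sum_integrable: "integrable M (\<lambda>\<omega>. (\<Sum>i<n. Y i \<omega>)\<^sup>2 / (real n)\<^sup>2)"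
    by (simp add: power2_eq_square sum_product Y_prod_integrable)
  have "(\<integral>\<^sup>+\<omega>. ennreal (((Xbar X n \<omega> - \<mu>0) \<bullet> \<phi> j)\<^sup>2) \<partial>M)
      = ennreal (\<integral>\<omega>. (\<Sum>i<n. Y i \<omega>)\<^sup>2 / (real n)\<^sup>2 \<partial>M)"
    unfolding coeff power_divide
    by (intro nn_integral_eq_integral) (auto simp: sq_sum_integrable)
  also have "\<dots> = ennreal (1 / (real n)\<^sup>2 * (\<Sum>i<n. \<integral>\<omega>. (Y i \<omega>)\<^sup>2 \<partial>M))"
    by (simp add: integral_sum_sq_indep_centered[OF Y_indep Y_integrable Y_prod_integrable Y_mean])
  also have "\<dots> = ennreal (1 / (real n)\<^sup>2) * ennreal (\<Sum>i<n. \<integral>\<omega>. (Y i \<omega>)\<^sup>2 \<partial>M)"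
    by (rule ennreal_mult) (auto intro: sum_nonneg)
  also have "ennreal (\<Sum>i<n. \<integral>\<omega>. (Y i \<omega>)\<^sup>2 \<partial>M) = (\<Sum>i<n. \<integral>\<^sup>+\<omega>. ennreal ((Y i \<omega>)\<^sup>2) \<partial>M)"
  proof -
    have "ennreal (\<Sum>i<n. \<integral>\<omega>. (Y i \<omega>)\<^sup>2 \<partial>M) = (\<Sum>i<n. ennreal (\<integral>\<omega>. (Y i \<omega>)\<^sup>2 \<partial>M))"
      by (rule sum_ennreal[symmetric]) simp
    also have "\<dots> = (\<Sum>i<n. \<integral>\<^sup>+\<omega>. ennreal ((Y i \<omega>)\<^sup>2) \<partial>M)"
      by (intro sum.cong refl nn_integral_eq_integral[symmetric] sq_integrable) auto
    finally show ?thesis .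
  qed
  finally show ?thesis by (simp add: Y_def)
qed

lemma sample_mean_mse_le:
  assumes n: "n \<ge> 1"
  shows "(\<integral>\<^sup>+\<omega>. ennreal ((norm (Xbar X n \<omega> - \<mu>0))\<^sup>2) \<partial>M) \<le> ennreal (4 * \<tau>\<^sup>2 / real n)"
proof -
  have "(\<lambda>\<omega>. Xbar X n \<omega> - \<mu>0) \<in> borel_measurable M" unfolding Xbar_def by measurable
  then have "(\<integral>\<^sup>+\<omega>. ennreal ((norm (Xbar X n \<omega> - \<mu>0))\<^sup>2) \<partial>M)
      = (\<Sum>j. ennreal (1 / (real n)\<^sup>2) * (\<Sum>i<n. \<integral>\<^sup>+\<omega>. ennreal (((X i \<omega> - \<mu>0) \<bullet> \<phi> j)\<^sup>2) \<partial>M))"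
    by (simp only: nn_integral_norm_sq_parseval[OF onb] sample_mean_coeff_mse[OF n])
  also have "\<dots> = ennreal (1 / (real n)\<^sup>2) * (\<Sum>i<n. \<Sum>j. \<integral>\<^sup>+\<omega>. ennreal (((X i \<omega> - \<mu>0) \<bullet> \<phi> j)\<^sup>2) \<partial>M)"
    by (simp only: ennreal_suminf_cmult suminf_sum summableI)
  also have "\<dots> = ennreal (1 / (real n)\<^sup>2) * (\<Sum>i<n. \<integral>\<^sup>+\<omega>. ennreal ((norm (X i \<omega> - \<mu>0))\<^sup>2) \<partial>M)"
    by (subst nn_integral_norm_sq_parseval[OF onb]) auto
  also have "\<dots> \<le> ennreal (1 / (real n)\<^sup>2) * (\<Sum>i<n. \<integral>\<^sup>+\<omega>. ennreal (4 * \<tau>\<^sup>2) \<partial>M)"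
  proof (intro mult_left_mono sum_mono nn_integral_mono_AE)
    fix i
    show "AE \<omega> in M. ennreal ((norm (X i \<omega> - \<mu>0))\<^sup>2) \<le> ennreal (4 * \<tau>\<^sup>2)"
      using X_centered_bounded[of i]
    proof eventually_elim
      case (elim \<omega>)
      then have "(norm (X i \<omega> - \<mu>0))\<^sup>2 \<le> (2 * \<tau>)\<^sup>2" by (intro power_mono) auto
      then show ?case by (intro ennreal_leI) (simp add: power_mult_distrib)
    qed
  qed simp
  also have "\<dots> = ennreal (1 / (real n)\<^sup>2) * ennreal (real n * (4 * \<tau>\<^sup>2))"
    by (simp add: emeasure_space_1 ennreal_of_nat_eq_real_of_nat ennreal_mult)
  also have "\<dots> = ennreal (1 / (real n)\<^sup>2 * (real n * (4 * \<tau>\<^sup>2)))"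
    by (rule ennreal_mult[symmetric]) auto
  also have "1 / (real n)\<^sup>2 * (real n * (4 * \<tau>\<^sup>2)) = 4 * \<tau>\<^sup>2 / real n"
    using n by (simp add: field_simps power2_eq_square)
  finally show ?thesis .
qed

end

section \<open>Laplace noise and polynomially decaying spectra\<close>

text \<open>The Laplace density is dominated by the mean of the exponential densities (rate \<open>1/s\<close>)
  of \<open>x\<close> and of \<open>-x\<close>; the two agree except at \<open>0\<close>.\<close>
lemma laplace_density_mult_sq_le:
  assumes s: "s > 0"
  shows "laplace_density s x * x\<^sup>2
    \<le> erlang_density 0 (1/s) x * x\<^sup>2 / 2 + erlang_density 0 (1/s) (- x) * (- x)\<^sup>2 / 2"
proof (cases "x \<ge> 0")
  case True
  then have "erlang_density 0 (1/s) x * x\<^sup>2 / 2 = laplace_density s x * x\<^sup>2"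
    using s by (simp add: erlang_density_def laplace_density_def field_simps)
  moreover have "0 \<le> erlang_density 0 (1/s) (- x) * (- x)\<^sup>2 / 2"
    using s by (intro divide_nonneg_nonneg mult_nonneg_nonneg erlang_density_nonneg) auto
  ultimately show ?thesis by linarith
next
  case False
  then have "erlang_density 0 (1/s) (- x) * (- x)\<^sup>2 / 2 = laplace_density s x * x\<^sup>2"
    using s by (simp add: erlang_density_def laplace_density_def field_simps)
  moreover have "0 \<le> erlang_density 0 (1/s) x * x\<^sup>2 / 2"
    using s by (intro divide_nonneg_nonneg mult_nonneg_nonneg erlang_density_nonneg) auto
  ultimately show ?thesis by linarith
qed

lemma nn_integral_half_exponential_second_moment:
  assumes s: "s > 0"
  shows "(\<integral>\<^sup>+x. ennreal (erlang_density 0 (1/s) x * x\<^sup>2 / 2) \<partial>lborel) = ennreal (s\<^sup>2)"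
proof -
  have "(\<integral>\<^sup>+x. ennreal (erlang_density 0 (1/s) x * x\<^sup>2 / 2) \<partial>lborel)
      = (\<integral>\<^sup>+x. ennreal (1/2) * ennreal (erlang_density 0 (1/s) x * x ^ 2) \<partial>lborel)"
  proof (intro nn_integral_cong)
    fix x
    have "0 \<le> erlang_density 0 (1/s) x * x ^ 2" using s by (simp add: erlang_density_nonneg)
    then show "ennreal (erlang_density 0 (1/s) x * x\<^sup>2 / 2)
        = ennreal (1/2) * ennreal (erlang_density 0 (1/s) x * x ^ 2)"
      by (subst ennreal_mult[symmetric]) auto
  qed
  also have "\<dots> = ennreal (1/2) * ennreal (fact (0 + 2) / (fact 0 * (1/s) ^ 2))"
    using s by (simp add: nn_integral_cmult nn_integral_erlang_ith_moment del: fact_2)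
  also have "\<dots> = ennreal (1/2 * (fact (0 + 2) / (fact 0 * (1/s) ^ 2)))"
    by (rule ennreal_mult[symmetric]) auto
  also have "\<dots> = ennreal (s\<^sup>2)"
    by (simp add: power_divide)
  finally show ?thesis .
qed

lemma laplace_second_moment_le:
  fixes W :: "'w \<Rightarrow> real"
  assumes s: "s > 0" and W: "distributed M lborel W (\<lambda>x. ennreal (laplace_density s x))"
  shows "(\<integral>\<^sup>+\<omega>. ennreal ((W \<omega>)\<^sup>2) \<partial>M) \<le> ennreal (2 * s\<^sup>2)"
proof -
  define h where "h x = erlang_density 0 (1/s) x * x\<^sup>2 / 2" for x
  have [measurable]: "h \<in> borel_measurable borel" unfolding h_def erlang_density_def by measurable
  have h_nonneg: "0 \<le> h x" for x unfolding h_def using s by (simp add: erlang_density_nonneg)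
  have pointwise: "ennreal (laplace_density s x) * ennreal (x\<^sup>2) \<le> ennreal (h x) + ennreal (h (- x))" for x
    using laplace_density_mult_sq_le[OF s, of x] s h_nonneg
    by (simp add: h_def laplace_density_def ennreal_mult[symmetric] ennreal_plus[symmetric]
        del: ennreal_plus)
  have "(\<integral>\<^sup>+\<omega>. ennreal ((W \<omega>)\<^sup>2) \<partial>M) = (\<integral>\<^sup>+x. ennreal (laplace_density s x) * ennreal (x\<^sup>2) \<partial>lborel)"
    by (rule distributed_nn_integral[OF W, symmetric]) auto
  also have "\<dots> \<le> (\<integral>\<^sup>+x. ennreal (h x) + ennreal (h (- x)) \<partial>lborel)"
    by (intro nn_integral_mono pointwise)
  also have "\<dots> = (\<integral>\<^sup>+x. ennreal (h x) \<partial>lborel) + (\<integral>\<^sup>+x. ennreal (h (- x)) \<partial>lborel)"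
    by (rule nn_integral_add) auto
  also have "(\<integral>\<^sup>+x. ennreal (h (- x)) \<partial>lborel) = (\<integral>\<^sup>+x. ennreal (h x) \<partial>lborel)"
    using nn_integral_real_affine[of "\<lambda>x. ennreal (h x)" "-1" 0] by simp
  finally show ?thesis
    using nn_integral_half_exponential_second_moment[OF s]
    by (simp add: h_def ennreal_plus[symmetric] del: ennreal_plus)
qed

lemma powr_neg_le_telescope:
  fixes x \<gamma> :: real
  assumes g: "\<gamma> > 1" and x: "x \<ge> 1"
  shows "(x + 1) powr (- \<gamma>) \<le> (x powr (1 - \<gamma>) - (x + 1) powr (1 - \<gamma>)) / (\<gamma> - 1)"
proof -
  have deriv: "((\<lambda>a. a powr (1 - \<gamma>)) has_real_derivative (1 - \<gamma>) * t powr (- \<gamma>)) (at t)" if "t > 0" for t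
    using has_real_derivative_powr[OF that, of "1 - \<gamma>"] by simp
  have "\<exists>z. x < z \<and> z < x + 1 \<and>
      (x + 1) powr (1 - \<gamma>) - x powr (1 - \<gamma>) = (x + 1 - x) * ((1 - \<gamma>) * z powr (- \<gamma>))"
    by (rule MVT2) (use x in \<open>auto intro!: deriv\<close>)
  then obtain z where z: "x < z" "z < x + 1"
    and eq: "(x + 1) powr (1 - \<gamma>) - x powr (1 - \<gamma>) = (1 - \<gamma>) * z powr (- \<gamma>)" by auto
  have "(x + 1) powr (- \<gamma>) \<le> z powr (- \<gamma>)"
    by (rule powr_mono2') (use z x g in auto)
  then have "(\<gamma> - 1) * (x + 1) powr (- \<gamma>) \<le> (\<gamma> - 1) * z powr (- \<gamma>)"
    using g by (intro mult_left_mono) auto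
  also have "\<dots> = x powr (1 - \<gamma>) - (x + 1) powr (1 - \<gamma>)" using eq by (simp add: algebra_simps)
  finally show ?thesis using g by (simp add: field_simps)
qed

lemma
  fixes \<gamma> :: real
  assumes g: "\<gamma> > 1" and N: "N \<ge> 1"
  shows summable_powr_tail: "summable (\<lambda>j. real (j + N + 1) powr (- \<gamma>))"
    and suminf_powr_tail_le: "(\<Sum>j. real (j + N + 1) powr (- \<gamma>)) \<le> real N powr (1 - \<gamma>) / (\<gamma> - 1)"
proof -
  define G where "G j = real (j + N) powr (1 - \<gamma>)" for j
  have "G \<longlonglongrightarrow> 0"
    unfolding G_def
  proof (rule tendsto_neg_powr)
    show "filterlim (\<lambda>j. real (j + N)) at_top sequentially"
      using filterlim_tendsto_add_at_top[OF tendsto_const filterlim_real_sequentially, of "real N"]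
      by (simp add: add.commute)
  qed (use g in simp)
  then have telescope: "(\<lambda>j. (G j - G (Suc j)) / (\<gamma> - 1)) sums (G 0 / (\<gamma> - 1))"
    using sums_divide[OF telescope_sums'] by fastforce
  have le: "real (j + N + 1) powr (- \<gamma>) \<le> (G j - G (Suc j)) / (\<gamma> - 1)" for j
    using powr_neg_le_telescope[OF g, of "real (j + N)"] N by (simp add: G_def add_ac)
  show summable: "summable (\<lambda>j. real (j + N + 1) powr (- \<gamma>))"
    by (rule summable_comparison_test'[OF sums_summable[OF telescope], of 0]) (use le in auto)
  show "(\<Sum>j. real (j + N + 1) powr (- \<gamma>)) \<le> real N powr (1 - \<gamma>) / (\<gamma> - 1)"
    using suminf_le[OF le summable sums_summable[OF telescope]] telescope
    by (simp add: sums_iff G_def)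
qed


locale polynomial_decay =
  fixes lam :: "nat \<Rightarrow> real" and \<beta> c1 c2 :: real
  assumes lam_pos: "\<And>j. lam j > 0"
    and lam_mono: "\<And>j. lam (Suc j) \<le> lam j"
    and beta_gt: "\<beta> > 1" and c1_pos: "c1 > 0" and c2_pos: "c2 > 0"
    and lam_lower: "\<And>j. c1 * real (Suc j) powr (- \<beta>) \<le> lam j"
    and lam_upper: "\<And>j. lam j \<le> c2 * real (Suc j) powr (- \<beta>)"
begin

lemma lam_antimono: "i \<le> j \<Longrightarrow> lam j \<le> lam i"
  by (induction j rule: dec_induct) (auto intro: order_trans[OF lam_mono])

lemma summable_powr_Suc: "\<gamma> > 1 \<Longrightarrow> summable (\<lambda>j. real (Suc j) powr (- \<gamma>))"
  using summable_Suc_iff[of "\<lambda>n. real n powr (- \<gamma>)"] summable_real_powr_iff[of "- \<gamma>"] by simp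

lemma summable_lam: "summable lam"
  by (rule summable_comparison_test'[OF summable_mult[OF summable_powr_Suc[OF beta_gt], of c2], of 0])
    (use lam_upper lam_pos in \<open>auto simp: less_imp_le\<close>)

lemma qr_weight_le_head:
  assumes "\<psi> \<ge> 0"
  shows "lam j powr (\<eta> - 1/2) / (lam j powr \<eta> + \<psi>) \<le> c1 powr (-1/2) * real (Suc j) powr (\<beta>/2)"
proof -
  have "lam j powr (\<eta> - 1/2) / (lam j powr \<eta> + \<psi>) \<le> lam j powr (\<eta> - 1/2) / lam j powr \<eta>"
    using assms lam_pos[of j] by (intro frac_le) auto
  also have "\<dots> = lam j powr (-1/2)" by (simp add: powr_diff[symmetric])
  also have "\<dots> \<le> (c1 * real (Suc j) powr (-\<beta>)) powr (-1/2)"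
    by (rule powr_mono2') (use lam_lower[of j] c1_pos in auto)
  also have "\<dots> = c1 powr (-1/2) * real (Suc j) powr (\<beta>/2)"
    by (simp add: powr_mult powr_powr)
  finally show ?thesis .
qed

lemma qr_weight_le_tail:
  assumes "\<psi> > 0" "\<eta> > 1/2"
  shows "lam j powr (\<eta> - 1/2) / (lam j powr \<eta> + \<psi>)
    \<le> c2 powr (\<eta> - 1/2) / \<psi> * real (Suc j) powr (- (\<beta> * (\<eta> - 1/2)))"
proof -
  have "lam j powr (\<eta> - 1/2) / (lam j powr \<eta> + \<psi>) \<le> lam j powr (\<eta> - 1/2) / \<psi>"
    using assms lam_pos[of j] by (intro frac_le) auto
  also have "lam j powr (\<eta> - 1/2) \<le> (c2 * real (Suc j) powr (-\<beta>)) powr (\<eta> - 1/2)"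
    by (rule powr_mono2) (use lam_upper[of j] lam_pos[of j] assms in auto)
  also have "\<dots> = c2 powr (\<eta> - 1/2) * real (Suc j) powr (- (\<beta> * (\<eta> - 1/2)))"
    by (simp add: powr_mult powr_powr)
  finally show ?thesis using assms by (simp add: divide_right_mono field_simps)
qed

lemma eta_gt_half: "\<beta> * (\<eta> - 1/2) > 1 \<Longrightarrow> \<eta> > 1/2"
  using beta_gt mult_nonneg_nonpos[of \<beta> "\<eta> - 1/2"] by linarith

definition qr_sum_const :: "real \<Rightarrow> real" where
  "qr_sum_const \<eta> = c1 powr (-1/2) * 2 powr (1 + \<beta>/2) + c2 powr (\<eta> - 1/2) / (\<beta> * (\<eta> - 1/2) - 1)"

definition qr_sum_exponent :: "real \<Rightarrow> real" where
  "qr_sum_exponent \<eta> = (1 + \<beta>/2) / (\<beta> * \<eta>)"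

lemma summable_qr_weight:
  assumes \<gamma>: "\<beta> * (\<eta> - 1/2) > 1" and \<psi>: "\<psi> > 0"
  shows "summable (\<lambda>j. lam j powr (\<eta> - 1/2) / (lam j powr \<eta> + \<psi>))"
  by (rule summable_comparison_test'[OF summable_mult[OF summable_powr_Suc[OF \<gamma>],
        of "c2 powr (\<eta> - 1/2) / \<psi>"], of 0])
    (use \<psi> qr_weight_le_tail[OF \<psi> eta_gt_half[OF \<gamma>]] in auto)

lemma qr_weight_head_sum_le:
  assumes "\<psi> \<ge> 0" "N \<ge> 1"
  shows "(\<Sum>j<N. lam j powr (\<eta> - 1/2) / (lam j powr \<eta> + \<psi>)) \<le> c1 powr (-1/2) * real N powr (1 + \<beta>/2)"
proof -
  have "(\<Sum>j<N. lam j powr (\<eta> - 1/2) / (lam j powr \<eta> + \<psi>)) \<le> (\<Sum>j<N. c1 powr (-1/2) * real N powr (\<beta>/2))"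
  proof (intro sum_mono)
    fix j assume "j \<in> {..<N}"
    then have "real (Suc j) powr (\<beta>/2) \<le> real N powr (\<beta>/2)"
      by (intro powr_mono2) (use beta_gt in auto)
    then show "lam j powr (\<eta> - 1/2) / (lam j powr \<eta> + \<psi>) \<le> c1 powr (-1/2) * real N powr (\<beta>/2)"
      using qr_weight_le_head[OF assms(1), of j \<eta>]
      by (meson less_imp_le mult_left_mono order_trans powr_ge_zero)
  qed
  also have "\<dots> = c1 powr (-1/2) * real N powr (1 + \<beta>/2)"
    using assms(2) by (simp add: powr_add)
  finally show ?thesis .
qed

lemma qr_weight_tail_sum_le:
  assumes \<gamma>: "\<beta> * (\<eta> - 1/2) > 1" and \<psi>: "\<psi> > 0" and N: "N \<ge> 1"
  shows "(\<Sum>j. lam (j + N) powr (\<eta> - 1/2) / (lam (j + N) powr \<eta> + \<psi>))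
    \<le> c2 powr (\<eta> - 1/2) / \<psi> * (real N powr (1 - \<beta> * (\<eta> - 1/2)) / (\<beta> * (\<eta> - 1/2) - 1))"
proof -
  define g where "g = \<beta> * (\<eta> - 1/2)"
  have g1: "g > 1" using \<gamma> by (simp add: g_def)
  have "(\<Sum>j. lam (j + N) powr (\<eta> - 1/2) / (lam (j + N) powr \<eta> + \<psi>))
      \<le> (\<Sum>j. c2 powr (\<eta> - 1/2) / \<psi> * real (j + N + 1) powr (- g))"
  proof (rule suminf_le)
    show "lam (j + N) powr (\<eta> - 1/2) / (lam (j + N) powr \<eta> + \<psi>)
        \<le> c2 powr (\<eta> - 1/2) / \<psi> * real (j + N + 1) powr (- g)" for j
      using qr_weight_le_tail[OF \<psi> eta_gt_half[OF \<gamma>], of "j + N"] by (simp add: g_def)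
    show "summable (\<lambda>j. lam (j + N) powr (\<eta> - 1/2) / (lam (j + N) powr \<eta> + \<psi>))"
      using summable_ignore_initial_segment[OF summable_qr_weight[OF \<gamma> \<psi>]] by simp
    show "summable (\<lambda>j. c2 powr (\<eta> - 1/2) / \<psi> * real (j + N + 1) powr (- g))"
      by (rule summable_mult[OF summable_powr_tail[OF g1 N]])
  qed
  also have "\<dots> \<le> c2 powr (\<eta> - 1/2) / \<psi> * (real N powr (1 - g) / (g - 1))"
    by (subst suminf_mult[OF summable_powr_tail[OF g1 N]])
      (intro mult_left_mono suminf_powr_tail_le[OF g1 N], use \<psi> in auto)
  finally show ?thesis by (simp add: g_def)
qed

text \<open>Split the series at \<open>N \<approx> \<psi> powr (-1/(\<beta>\<eta>))\<close>, where the two bounds on a term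
  cross: below \<open>N\<close> a term is at most \<open>lam j powr (-1/2)\<close>, beyond it at most
  \<open>lam j powr (\<eta> - 1/2) / \<psi>\<close>.\<close>
lemma qr_weight_sum_le:
  assumes \<gamma>: "\<beta> * (\<eta> - 1/2) > 1" and \<psi>: "0 < \<psi>" "\<psi> \<le> 1"
  shows "(\<Sum>j. lam j powr (\<eta> - 1/2) / (lam j powr \<eta> + \<psi>))
    \<le> qr_sum_const \<eta> * \<psi> powr (- qr_sum_exponent \<eta>)"
proof -
  define g where "g = \<beta> * (\<eta> - 1/2)"
  define E where "E = qr_sum_exponent \<eta>"
  define T where "T j = lam j powr (\<eta> - 1/2) / (lam j powr \<eta> + \<psi>)" for j
  have g1: "g > 1" using \<gamma> by (simp add: g_def)
  have \<eta>: "\<eta> > 1/2" by (rule eta_gt_half[OF \<gamma>])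
  define P where "P = \<psi> powr (- 1 / (\<beta> * \<eta>))"
  have P1: "P \<ge> 1"
    using powr_mono2'[of "- 1 / (\<beta> * \<eta>)" \<psi> 1] \<psi> \<eta> beta_gt by (simp add: P_def divide_nonpos_pos)
  define N where "N = nat \<lceil>P\<rceil>"
  have N: "real N \<ge> P" "real N \<le> 2 * P" "N \<ge> 1"
    using ceiling_correct[of P] P1 unfolding N_def by linarith+
  have "(\<Sum>j<N. T j) \<le> c1 powr (-1/2) * real N powr (1 + \<beta>/2)"
    unfolding T_def by (rule qr_weight_head_sum_le) (use \<psi> N in auto)
  also have "\<dots> \<le> c1 powr (-1/2) * (2 * P) powr (1 + \<beta>/2)"
    by (intro mult_left_mono powr_mono2) (use N beta_gt in auto)
  also have "(2 * P) powr (1 + \<beta>/2) = 2 powr (1 + \<beta>/2) * \<psi> powr (- E)"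
    using \<psi> by (simp add: powr_mult P_def powr_powr E_def qr_sum_exponent_def)
  finally have head: "(\<Sum>j<N. T j) \<le> c1 powr (-1/2) * 2 powr (1 + \<beta>/2) * \<psi> powr (- E)"
    by (simp add: mult.assoc)
  have "(\<Sum>j. T (j + N)) \<le> c2 powr (\<eta> - 1/2) / \<psi> * (real N powr (1 - g) / (g - 1))"
    using qr_weight_tail_sum_le[OF \<gamma> \<psi>(1) N(3)] by (simp add: T_def g_def)
  also have "\<dots> \<le> c2 powr (\<eta> - 1/2) / \<psi> * (P powr (1 - g) / (g - 1))"
    by (intro mult_left_mono divide_right_mono powr_mono2') (use g1 N P1 \<psi> in auto)
  also have "P powr (1 - g) = \<psi> powr (- E) * \<psi>"
  proof -
    have "P powr (1 - g) = \<psi> powr (- E + 1)"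
      unfolding P_def powr_powr
      by (rule arg_cong[where f="\<lambda>x. \<psi> powr x"])
        (use beta_gt \<eta> in \<open>simp add: E_def qr_sum_exponent_def g_def field_simps\<close>)
    also have "\<dots> = \<psi> powr (- E) * \<psi> powr 1" by (rule powr_add)
    finally show ?thesis using \<psi> by simp
  qed
  also have "c2 powr (\<eta> - 1/2) / \<psi> * (\<psi> powr (- E) * \<psi> / (g - 1))
      = c2 powr (\<eta> - 1/2) / (g - 1) * \<psi> powr (- E)"
    using \<psi> g1 by (simp add: field_simps)
  finally have tail: "(\<Sum>j. T (j + N)) \<le> c2 powr (\<eta> - 1/2) / (g - 1) * \<psi> powr (- E)" .
  have "(\<Sum>j. T j) = (\<Sum>j. T (j + N)) + (\<Sum>j<N. T j)"
    by (rule suminf_split_initial_segment) (use summable_qr_weight[OF \<gamma> \<psi>(1)] in \<open>simp add: T_def\<close>)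
  also have "\<dots> \<le> qr_sum_const \<eta> * \<psi> powr (- E)"
    using head tail by (simp add: qr_sum_const_def g_def distrib_right)
  finally show ?thesis by (simp add: T_def E_def)
qed

lemma tail_energy_le:
  assumes \<eta>: "\<eta> > 0" and reg: "summable (\<lambda>j. (\<mu> \<bullet> \<phi> j)\<^sup>2 / lam j powr \<eta>)"
  shows "(\<Sum>j. if j \<ge> m then (\<mu> \<bullet> \<phi> j)\<^sup>2 else 0) \<le> lam m powr \<eta> * (\<Sum>j. (\<mu> \<bullet> \<phi> j)\<^sup>2 / lam j powr \<eta>)"
proof -
  have le: "(if j \<ge> m then (\<mu> \<bullet> \<phi> j)\<^sup>2 else 0) \<le> lam m powr \<eta> * ((\<mu> \<bullet> \<phi> j)\<^sup>2 / lam j powr \<eta>)" for j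
  proof (cases "j \<ge> m")
    case True
    have "lam j powr \<eta> \<le> lam m powr \<eta>"
      by (rule powr_mono2) (use lam_antimono[OF True] lam_pos[of j] \<eta> in auto)
    then have "(\<mu> \<bullet> \<phi> j)\<^sup>2 * lam j powr \<eta> \<le> (\<mu> \<bullet> \<phi> j)\<^sup>2 * lam m powr \<eta>"
      by (intro mult_left_mono) auto
    then show ?thesis using True lam_pos[of j] by (simp add: field_simps)
  qed (use lam_pos[of j] lam_pos[of m] in simp)
  have s1: "summable (\<lambda>j. lam m powr \<eta> * ((\<mu> \<bullet> \<phi> j)\<^sup>2 / lam j powr \<eta>))"
    by (rule summable_mult[OF reg])
  have s2: "summable (\<lambda>j. if j \<ge> m then (\<mu> \<bullet> \<phi> j)\<^sup>2 else 0)"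
    by (rule summable_comparison_test'[OF s1, of 0]) (use le in auto)
  have "(\<Sum>j. if j \<ge> m then (\<mu> \<bullet> \<phi> j)\<^sup>2 else 0) \<le> (\<Sum>j. lam m powr \<eta> * ((\<mu> \<bullet> \<phi> j)\<^sup>2 / lam j powr \<eta>))"
    by (rule suminf_le[OF le s2 s1])
  then show ?thesis by (simp only: suminf_mult[OF reg])
qed

lemma n_lam_powr_le:
  assumes a: "a > 0" and \<eta>: "\<eta> > 0" and n: "n \<ge> 1"
    and m: "a * real n powr (1 / (\<eta> * \<beta>)) \<le> real m"
  shows "real n * lam m powr \<eta> \<le> c2 powr \<eta> * a powr (- \<beta> * \<eta>)"
proof -
  have an_pos: "a * real n powr (1 / (\<eta> * \<beta>)) > 0" using a n by simp
  then have m_pos: "real m > 0" using m by linarith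
  have "lam m \<le> c2 * real m powr (- \<beta>)"
    using lam_upper[of m] powr_mono2'[of "- \<beta>" "real m" "real (Suc m)"] beta_gt c2_pos m_pos
    by (smt (verit) mult_left_mono of_nat_Suc)
  then have "lam m powr \<eta> \<le> (c2 * real m powr (- \<beta>)) powr \<eta>"
    by (intro powr_mono2) (use lam_pos[of m] \<eta> in auto)
  also have "\<dots> = c2 powr \<eta> * real m powr (- \<beta> * \<eta>)" by (simp add: powr_mult powr_powr)
  also have "real m powr (- \<beta> * \<eta>) \<le> (a * real n powr (1 / (\<eta> * \<beta>))) powr (- \<beta> * \<eta>)"
    by (rule powr_mono2') (use beta_gt \<eta> an_pos m in auto)
  also have "\<dots> = a powr (- \<beta> * \<eta>) / real n"
  proof -
    have "1 / (\<eta> * \<beta>) * (- \<beta> * \<eta>) = -1" using beta_gt \<eta> by (simp add: field_simps)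
    then show ?thesis using n by (simp add: powr_mult powr_powr powr_minus divide_inverse)
  qed
  finally have "lam m powr \<eta> \<le> c2 powr \<eta> * (a powr (- \<beta> * \<eta>) / real n)"
    using c2_pos by (simp add: mult_left_mono)
  then show ?thesis using n by (simp add: field_simps)
qed

lemma n_iclp_scale_sq_le:
  assumes \<gamma>: "\<beta> * (\<eta> - 1/2) > 1" and \<psi>: "0 < \<psi>" "\<psi> \<le> 1" and n: "n \<ge> 1" and \<epsilon>: "\<epsilon> > 0"
  shows "real n * (sqrt 2 * delta_qr lam \<eta> \<psi> \<tau> n / \<epsilon>)\<^sup>2
    \<le> 8 * \<tau>\<^sup>2 * (qr_sum_const \<eta>)\<^sup>2 * \<psi> powr (- 2 * qr_sum_exponent \<eta>) / (real n * \<epsilon>\<^sup>2)"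
proof -
  define S where "S = (\<Sum>j. lam j powr (\<eta> - 1/2) / (lam j powr \<eta> + \<psi>))"
  have "S \<ge> 0"
    unfolding S_def by (intro suminf_nonneg summable_qr_weight[OF \<gamma> \<psi>(1)]) (use \<psi> in simp)
  then have "S\<^sup>2 \<le> (qr_sum_const \<eta> * \<psi> powr (- qr_sum_exponent \<eta>))\<^sup>2"
    using qr_weight_sum_le[OF \<gamma> \<psi>] by (intro power_mono) (auto simp: S_def)
  also have "\<dots> = (qr_sum_const \<eta>)\<^sup>2 * \<psi> powr (- 2 * qr_sum_exponent \<eta>)"
    using powr_power[of \<psi> "- qr_sum_exponent \<eta>" 2] \<psi> by (simp add: power_mult_distrib mult.commute)
  finally have S_sq: "S\<^sup>2 \<le> (qr_sum_const \<eta>)\<^sup>2 * \<psi> powr (- 2 * qr_sum_exponent \<eta>)" .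
  have "real n * (sqrt 2 * delta_qr lam \<eta> \<psi> \<tau> n / \<epsilon>)\<^sup>2 = 8 * \<tau>\<^sup>2 * S\<^sup>2 / (real n * \<epsilon>\<^sup>2)"
    using n \<epsilon> by (simp add: delta_qr_def S_def power_mult_distrib power_divide field_simps power2_eq_square)
  also have "\<dots> \<le> 8 * \<tau>\<^sup>2 * ((qr_sum_const \<eta>)\<^sup>2 * \<psi> powr (- 2 * qr_sum_exponent \<eta>)) / (real n * \<epsilon>\<^sup>2)"
    by (intro divide_right_mono mult_left_mono S_sq) auto
  finally show ?thesis by (simp add: mult.assoc)
qed

end

section \<open>Pointwise error bounds\<close>

lemma sq_add_le: "(a + b)\<^sup>2 \<le> 2 * a\<^sup>2 + 2 * b\<^sup>2" for a b :: real
  using sum_squares_ge_zero[of "a - b" 0] by (simp add: power2_eq_square algebra_simps)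

lemma sq_add3_le: "(a + b + c)\<^sup>2 \<le> 3 * a\<^sup>2 + 3 * b\<^sup>2 + 3 * c\<^sup>2" for a b c :: real
proof -
  have "0 \<le> (a - b)\<^sup>2 + (b - c)\<^sup>2 + (a - c)\<^sup>2" by simp
  then show ?thesis by (simp add: power2_eq_square algebra_simps)
qed

lemma norm_truncated_estimate_sq_le:
  assumes onb: "orthonormal_basis \<phi>"
  shows "(norm ((\<Sum>j<m. (x \<bullet> \<phi> j + B * w j) *\<^sub>R \<phi> j) - \<mu>))\<^sup>2
     \<le> 2 * (norm (x - \<mu>))\<^sup>2 + 2 * B\<^sup>2 * (\<Sum>j<m. (w j)\<^sup>2) + (\<Sum>j. if j \<ge> m then (\<mu> \<bullet> \<phi> j)\<^sup>2 else 0)"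
proof -
  define v where "v = (\<Sum>j<m. (x \<bullet> \<phi> j + B * w j) *\<^sub>R \<phi> j) - \<mu>"
  define noise where "noise k = 2 * B\<^sup>2 * (if k < m then (w k)\<^sup>2 else 0)" for k
  define tail where "tail k = (if k \<ge> m then (\<mu> \<bullet> \<phi> k)\<^sup>2 else 0)" for k
  have coeff: "v \<bullet> \<phi> k = (if k < m then (x - \<mu>) \<bullet> \<phi> k + B * w k else - (\<mu> \<bullet> \<phi> k))" for k
    unfolding v_def by (simp add: inner_diff_left inner_sum_orthonormal[OF onb])
  have "(v \<bullet> \<phi> k)\<^sup>2 \<le> 2 * ((x - \<mu>) \<bullet> \<phi> k)\<^sup>2 + noise k + tail k" for k
    using sq_add_le[of "(x - \<mu>) \<bullet> \<phi> k" "B * w k"]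
    by (cases "k < m") (simp_all add: coeff noise_def tail_def power_mult_distrib)
  moreover have summable_noise: "summable noise"
    unfolding noise_def by (intro summable_mult) (rule summable_finite[of "{..<m}"]; auto)
  moreover have summable_tail: "summable tail"
    unfolding tail_def by (rule summable_comparison_test'[OF summable_coeffs_sq[OF onb, of \<mu>], of 0]) auto
  moreover have summable_x: "summable (\<lambda>k. 2 * ((x - \<mu>) \<bullet> \<phi> k)\<^sup>2)"
    using summable_coeffs_sq[OF onb] by simp
  ultimately have "(norm v)\<^sup>2 \<le> (\<Sum>k. 2 * ((x - \<mu>) \<bullet> \<phi> k)\<^sup>2 + noise k + tail k)"
    by (intro norm_sq_le_suminf_of_coeffs[OF onb] summable_add)
  also have "\<dots> = (\<Sum>k. 2 * ((x - \<mu>) \<bullet> \<phi> k)\<^sup>2) + (\<Sum>k. noise k) + (\<Sum>k. tail k)"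
    by (simp only: suminf_add[OF summable_add[OF summable_x summable_noise] summable_tail, symmetric]
        suminf_add[OF summable_x summable_noise, symmetric])
  also have "(\<Sum>k. 2 * ((x - \<mu>) \<bullet> \<phi> k)\<^sup>2) = 2 * (norm (x - \<mu>))\<^sup>2"
    using parseval_sums[OF onb, of "x - \<mu>"] by (simp add: sums_iff suminf_mult summable_coeffs_sq[OF onb])
  also have "(\<Sum>k. noise k) = 2 * B\<^sup>2 * (\<Sum>j<m. (w j)\<^sup>2)"
    unfolding noise_def by (subst suminf_finite[of "{..<m}"]) (auto simp: sum_distrib_left)
  finally show ?thesis unfolding v_def tail_def .
qed

lemma norm_noise_series_sq:
  fixes \<phi> :: "nat \<Rightarrow> 'a::{real_inner,banach}"
  assumes onb: "orthonormal_basis \<phi>" and lam: "\<And>k. lam k \<ge> 0"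
    and summable: "summable (\<lambda>k. lam k * (z k)\<^sup>2)"
  shows "(norm (\<Sum>k. (sqrt (lam k) * z k) *\<^sub>R \<phi> k))\<^sup>2 = (\<Sum>k. lam k * (z k)\<^sup>2)"
  using norm_orthonormal_series_sq[OF onb, of "\<lambda>k. sqrt (lam k) * z k"] summable lam
  by (simp add: power_mult_distrib)

lemma norm_qr_plus_noise_sq_le:
  fixes \<phi> :: "nat \<Rightarrow> 'a::{real_inner,banach}" and lam :: "nat \<Rightarrow> real"
  assumes onb: "orthonormal_basis \<phi>" and lam: "\<And>k. lam k > 0" and \<psi>: "\<psi> > 0"
    and summable_z: "summable (\<lambda>k. lam k * (z k)\<^sup>2)"
    and reg: "summable (\<lambda>k. (\<mu> \<bullet> \<phi> k)\<^sup>2 / lam k powr \<eta>)"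
  shows "(norm ((\<Sum>k. (lam k powr \<eta> / (lam k powr \<eta> + \<psi>) * (x \<bullet> \<phi> k)) *\<^sub>R \<phi> k)
            + \<sigma> *\<^sub>R (\<Sum>k. (sqrt (lam k) * z k) *\<^sub>R \<phi> k) - \<mu>))\<^sup>2
     \<le> 3 * (norm (x - \<mu>))\<^sup>2 + 3 * \<psi> * (\<Sum>k. (\<mu> \<bullet> \<phi> k)\<^sup>2 / lam k powr \<eta>)
       + 3 * \<sigma>\<^sup>2 * (\<Sum>k. lam k * (z k)\<^sup>2)"
proof -
  define w where "w k = lam k powr \<eta> / (lam k powr \<eta> + \<psi>)" for k
  have w: "0 \<le> w k" "w k \<le> 1" for k unfolding w_def using \<psi> powr_ge_zero[of "lam k" \<eta>]
    by (auto simp: divide_le_eq_1 add_nonneg_pos)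
  have w_sq: "(w k * c)\<^sup>2 \<le> c\<^sup>2" for k c
    using mult_right_mono[of "(w k)\<^sup>2" 1 "c\<^sup>2"] w[of k] by (simp add: power_le_one power_mult_distrib)
  have bias: "((1 - w k) * c)\<^sup>2 \<le> \<psi> * (c\<^sup>2 / lam k powr \<eta>)" for k c
  proof -
    have lp: "lam k powr \<eta> > 0" using lam[of k] by simp
    have "1 - a / (a + \<psi>) = \<psi> / (a + \<psi>)" if "a > 0" for a
      using that \<psi> by (simp add: field_simps)
    then have "1 - w k = \<psi> / (lam k powr \<eta> + \<psi>)" unfolding w_def using lp by blast
    then have "1 - w k \<le> \<psi> / lam k powr \<eta>" using lp \<psi> by (simp add: frac_le)
    moreover have "(1 - w k)\<^sup>2 \<le> 1 - w k"
      using w[of k] mult_left_le[of "1 - w k" "1 - w k"] by (simp add: power2_eq_square)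
    ultimately have "(1 - w k)\<^sup>2 * c\<^sup>2 \<le> \<psi> / lam k powr \<eta> * c\<^sup>2" by (intro mult_right_mono) auto
    then show ?thesis by (simp add: power_mult_distrib)
  qed
  have summable_wx: "summable (\<lambda>k. (w k * (x \<bullet> \<phi> k))\<^sup>2)"
    by (rule summable_comparison_test'[OF summable_coeffs_sq[OF onb, of x], of 0]) (simp add: w_sq)
  have summable_noise: "summable (\<lambda>k. (sqrt (lam k) * z k)\<^sup>2)"
    using summable_z lam by (simp add: power_mult_distrib less_imp_le)
  define v where "v = (\<Sum>k. (w k * (x \<bullet> \<phi> k)) *\<^sub>R \<phi> k) + \<sigma> *\<^sub>R (\<Sum>k. (sqrt (lam k) * z k) *\<^sub>R \<phi> k) - \<mu>"
  have "v \<bullet> \<phi> k = w k * ((x - \<mu>) \<bullet> \<phi> k) - (1 - w k) * (\<mu> \<bullet> \<phi> k) + \<sigma> * (sqrt (lam k) * z k)" for k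
    unfolding v_def using inner_orthonormal_series[OF onb summable_wx] inner_orthonormal_series[OF onb summable_noise]
    by (simp add: inner_diff_left inner_add_left algebra_simps)
  then have "(v \<bullet> \<phi> k)\<^sup>2 \<le> 3 * ((x - \<mu>) \<bullet> \<phi> k)\<^sup>2 + 3 * \<psi> * ((\<mu> \<bullet> \<phi> k)\<^sup>2 / lam k powr \<eta>)
      + 3 * \<sigma>\<^sup>2 * (lam k * (z k)\<^sup>2)" for k
    using sq_add3_le[of "w k * ((x - \<mu>) \<bullet> \<phi> k)" "- ((1 - w k) * (\<mu> \<bullet> \<phi> k))" "\<sigma> * (sqrt (lam k) * z k)"]
      w_sq[of k "(x - \<mu>) \<bullet> \<phi> k"] bias[of k "\<mu> \<bullet> \<phi> k"] lam[of k]
    by (simp add: power_mult_distrib less_imp_le)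
  moreover have s1: "summable (\<lambda>k. 3 * ((x - \<mu>) \<bullet> \<phi> k)\<^sup>2)" using summable_coeffs_sq[OF onb] by simp
  moreover have s2: "summable (\<lambda>k. 3 * \<psi> * ((\<mu> \<bullet> \<phi> k)\<^sup>2 / lam k powr \<eta>))" by (intro summable_mult reg)
  moreover have s3: "summable (\<lambda>k. 3 * \<sigma>\<^sup>2 * (lam k * (z k)\<^sup>2))" by (intro summable_mult summable_z)
  ultimately have "(norm v)\<^sup>2 \<le> (\<Sum>k. 3 * ((x - \<mu>) \<bullet> \<phi> k)\<^sup>2 + 3 * \<psi> * ((\<mu> \<bullet> \<phi> k)\<^sup>2 / lam k powr \<eta>)
      + 3 * \<sigma>\<^sup>2 * (lam k * (z k)\<^sup>2))"
    by (intro norm_sq_le_suminf_of_coeffs[OF onb] summable_add)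
  also have "\<dots> = (\<Sum>k. 3 * ((x - \<mu>) \<bullet> \<phi> k)\<^sup>2) + (\<Sum>k. 3 * \<psi> * ((\<mu> \<bullet> \<phi> k)\<^sup>2 / lam k powr \<eta>))
      + (\<Sum>k. 3 * \<sigma>\<^sup>2 * (lam k * (z k)\<^sup>2))"
    by (simp only: suminf_add[OF summable_add[OF s1 s2] s3, symmetric] suminf_add[OF s1 s2, symmetric])
  also have "\<dots> = (\<Sum>k. 3 * ((x - \<mu>) \<bullet> \<phi> k)\<^sup>2) + 3 * \<psi> * (\<Sum>k. (\<mu> \<bullet> \<phi> k)\<^sup>2 / lam k powr \<eta>)
      + 3 * \<sigma>\<^sup>2 * (\<Sum>k. lam k * (z k)\<^sup>2)"
    by (simp only: suminf_mult[OF reg] suminf_mult[OF summable_z])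
  also have "(\<Sum>k. 3 * ((x - \<mu>) \<bullet> \<phi> k)\<^sup>2) = 3 * (norm (x - \<mu>))\<^sup>2"
    using parseval_sums[OF onb, of "x - \<mu>"] by (simp add: sums_iff suminf_mult summable_coeffs_sq[OF onb])
  finally show ?thesis unfolding v_def w_def .
qed

lemma (in prob_space) nn_integral_le_of_AE_le_combination:
  fixes f :: "'a \<Rightarrow> real" and g :: "'a \<Rightarrow> ennreal"
  assumes [measurable]: "f \<in> borel_measurable M" "g \<in> borel_measurable M"
    and f_nonneg: "\<And>\<omega>. 0 \<le> f \<omega>"
    and le: "AE \<omega> in M. ennreal (h \<omega>) \<le> ennreal (p * f \<omega>) + ennreal q + ennreal r * g \<omega>"
    and F: "(\<integral>\<^sup>+\<omega>. ennreal (f \<omega>) \<partial>M) \<le> ennreal F" and G: "(\<integral>\<^sup>+\<omega>. g \<omega> \<partial>M) \<le> ennreal G"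
    and nonneg: "0 \<le> p" "0 \<le> q" "0 \<le> r" "0 \<le> F" "0 \<le> G"
  shows "(\<integral>\<^sup>+\<omega>. ennreal (h \<omega>) \<partial>M) \<le> ennreal (p * F + q + r * G)"
proof -
  have "(\<integral>\<^sup>+\<omega>. ennreal (h \<omega>) \<partial>M) \<le> (\<integral>\<^sup>+\<omega>. ennreal p * ennreal (f \<omega>) + ennreal q + ennreal r * g \<omega> \<partial>M)"
    by (rule nn_integral_mono_AE) (use le f_nonneg nonneg in \<open>auto simp: ennreal_mult\<close>)
  also have "\<dots> = ennreal p * (\<integral>\<^sup>+\<omega>. ennreal (f \<omega>) \<partial>M) + ennreal q + ennreal r * (\<integral>\<^sup>+\<omega>. g \<omega> \<partial>M)"
    by (simp add: nn_integral_add nn_integral_cmult emeasure_space_1)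
  also have "\<dots> \<le> ennreal p * ennreal F + ennreal q + ennreal r * ennreal G"
    by (intro add_mono mult_left_mono F G order_refl) auto
  also have "\<dots> = ennreal (p * F + q + r * G)"
    using nonneg by (simp add: ennreal_mult)
  finally show ?thesis .
qed

lemma (in prob_space)
  fixes Z :: "nat \<Rightarrow> 'a \<Rightarrow> real" and lam :: "nat \<Rightarrow> real"
  assumes [measurable]: "\<And>k. Z k \<in> borel_measurable M"
    and Z_sq: "\<And>k. (\<integral>\<^sup>+\<omega>. ennreal ((Z k \<omega>)\<^sup>2) \<partial>M) \<le> 1"
    and lam: "\<And>k. 0 \<le> lam k" "summable lam"
  shows nn_integral_weighted_sq_series_le:
      "(\<integral>\<^sup>+\<omega>. (\<Sum>k. ennreal (lam k * (Z k \<omega>)\<^sup>2)) \<partial>M) \<le> ennreal (\<Sum>k. lam k)"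
    and AE_summable_weighted_sq: "AE \<omega> in M. summable (\<lambda>k. lam k * (Z k \<omega>)\<^sup>2)"
proof -
  have "(\<integral>\<^sup>+\<omega>. (\<Sum>k. ennreal (lam k * (Z k \<omega>)\<^sup>2)) \<partial>M)
      = (\<Sum>k. ennreal (lam k) * (\<integral>\<^sup>+\<omega>. ennreal ((Z k \<omega>)\<^sup>2) \<partial>M))"
    by (simp add: nn_integral_suminf ennreal_mult lam nn_integral_cmult[symmetric])
  also have "\<dots> \<le> (\<Sum>k. ennreal (lam k))"
    using mult_left_mono[OF Z_sq] by (intro suminf_le summableI) (simp add: mult.commute)
  also have "\<dots> = ennreal (\<Sum>k. lam k)"
    by (rule suminf_ennreal2) (use lam in auto)
  finally show bound: "(\<integral>\<^sup>+\<omega>. (\<Sum>k. ennreal (lam k * (Z k \<omega>)\<^sup>2)) \<partial>M) \<le> ennreal (\<Sum>k. lam k)" .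
  then have "AE \<omega> in M. (\<Sum>k. ennreal (lam k * (Z k \<omega>)\<^sup>2)) \<noteq> \<infinity>"
    by (intro nn_integral_PInf_AE) (auto simp: top_unique)
  then show "AE \<omega> in M. summable (\<lambda>k. lam k * (Z k \<omega>)\<^sup>2)"
    by eventually_elim (rule summable_suminf_not_top, use lam in auto)
qed

section \<open>Mean squared errors of the private estimators\<close>

lemma cube_le_of_le_cbrt:
  assumes "b > 0" "n \<ge> 1" "real m \<le> b * real n powr (1/3)"
  shows "real m ^ 3 \<le> b ^ 3 * real n"
proof -
  have "real m ^ 3 \<le> (b * real n powr (1/3)) ^ 3" by (rule power_mono) (use assms in auto)
  also have "\<dots> = b ^ 3 * real n powr (real 3 * (1/3))"
    using assms by (simp add: power_mult_distrib powr_power)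
  finally show ?thesis using assms by simp
qed

lemma powr_neg_le_of_ge_powr:
  fixes a x p e \<psi> :: real
  assumes "0 < a" "0 < x" "a * x powr (- p) \<le> \<psi>" "p * e = 1" "e \<ge> 0"
  shows "\<psi> powr (- e) \<le> a powr (- e) * x"
proof -
  have "\<psi> powr (- e) \<le> (a * x powr (- p)) powr (- e)"
    by (rule powr_mono2') (use assms in auto)
  also have "\<dots> = a powr (- e) * x"
    using assms by (simp add: powr_mult powr_powr)
  finally show ?thesis .
qed

locale private_mean_setting =
  bounded_iid_sample M X \<mu>0 \<tau> \<phi> + polynomial_decay lam \<beta> c1 c2
  for M :: "'w measure" and X :: "nat \<Rightarrow> 'w \<Rightarrow> 'a::{real_inner, banach, second_countable_topology}"
    and \<mu>0 \<tau> \<phi> lam \<beta> c1 c2 +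
  fixes \<eta> :: real
  assumes mu0_regular: "in_H_C_pow lam \<phi> \<eta> \<mu>0"
begin

definition C_eta_norm_sq :: real where
  "C_eta_norm_sq = (\<Sum>j. (\<mu>0 \<bullet> \<phi> j)\<^sup>2 / lam j powr \<eta>)"

lemma summable_C_eta: "summable (\<lambda>j. (\<mu>0 \<bullet> \<phi> j)\<^sup>2 / lam j powr \<eta>)"
  using mu0_regular by (simp add: in_H_C_pow_def)

lemma C_eta_norm_sq_nonneg: "C_eta_norm_sq \<ge> 0"
  unfolding C_eta_norm_sq_def by (intro suminf_nonneg summable_C_eta) auto

lemma frl_mse_le:
  assumes W0: "\<And>j. distributed M lborel (W0 j) (\<lambda>x. ennreal (laplace_density 1 x))"
    and \<eta>: "\<eta> > 0" and n: "n \<ge> 1" and \<epsilon>: "\<epsilon> > 0"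
  shows "(\<integral>\<^sup>+\<omega>. ennreal ((norm (frl_est \<phi> \<tau> \<epsilon> X W0 n m \<omega> - \<mu>0))\<^sup>2) \<partial>M)
    \<le> ennreal (8 * \<tau>\<^sup>2 / real n + lam m powr \<eta> * C_eta_norm_sq + 16 * \<tau>\<^sup>2 * real m ^ 3 / ((real n)\<^sup>2 * \<epsilon>\<^sup>2))"
proof -
  have [measurable]: "W0 j \<in> borel_measurable M" for j
    using distributed_measurable[OF W0[of j]] by simp
  have [measurable]: "Xbar X n \<in> borel_measurable M" unfolding Xbar_def by measurable
  define B where "B = 2 * real m * \<tau> / (real n * \<epsilon>)"
  define tail where "tail = lam m powr \<eta> * C_eta_norm_sq"
  have tail_nonneg: "tail \<ge> 0" unfolding tail_def using C_eta_norm_sq_nonneg by simp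
  have pointwise: "AE \<omega> in M. ennreal ((norm (frl_est \<phi> \<tau> \<epsilon> X W0 n m \<omega> - \<mu>0))\<^sup>2)
      \<le> ennreal (2 * (norm (Xbar X n \<omega> - \<mu>0))\<^sup>2) + ennreal tail + ennreal (2 * B\<^sup>2) * (\<Sum>j<m. ennreal ((W0 j \<omega>)\<^sup>2))"
  proof (rule AE_I2)
    fix \<omega>
    have "(norm (frl_est \<phi> \<tau> \<epsilon> X W0 n m \<omega> - \<mu>0))\<^sup>2
        \<le> 2 * (norm (Xbar X n \<omega> - \<mu>0))\<^sup>2 + 2 * B\<^sup>2 * (\<Sum>j<m. (W0 j \<omega>)\<^sup>2) + tail"
      using norm_truncated_estimate_sq_le[OF onb, where m = m and x = "Xbar X n \<omega>" and B = B
          and w = "\<lambda>j. W0 j \<omega>" and \<mu> = \<mu>0]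
        tail_energy_le[OF \<eta> summable_C_eta, of m]
      unfolding frl_est_def B_def tail_def C_eta_norm_sq_def by linarith
    then show "ennreal ((norm (frl_est \<phi> \<tau> \<epsilon> X W0 n m \<omega> - \<mu>0))\<^sup>2)
        \<le> ennreal (2 * (norm (Xbar X n \<omega> - \<mu>0))\<^sup>2) + ennreal tail + ennreal (2 * B\<^sup>2) * (\<Sum>j<m. ennreal ((W0 j \<omega>)\<^sup>2))"
      using tail_nonneg by (simp add: ennreal_mult[symmetric] ennreal_plus[symmetric] sum_nonneg
          del: ennreal_plus)
  qed
  have noise: "(\<integral>\<^sup>+\<omega>. (\<Sum>j<m. ennreal ((W0 j \<omega>)\<^sup>2)) \<partial>M) \<le> ennreal (2 * real m)"
  proof -
    have "(\<integral>\<^sup>+\<omega>. (\<Sum>j<m. ennreal ((W0 j \<omega>)\<^sup>2)) \<partial>M) = (\<Sum>j<m. \<integral>\<^sup>+\<omega>. ennreal ((W0 j \<omega>)\<^sup>2) \<partial>M)"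
      by (rule nn_integral_sum) auto
    also have "\<dots> \<le> (\<Sum>j<m. ennreal 2)"
      using laplace_second_moment_le[OF _ W0] by (intro sum_mono) simp
    finally show ?thesis by (simp add: ennreal_of_nat_eq_real_of_nat ennreal_mult mult.commute)
  qed
  have "(\<integral>\<^sup>+\<omega>. ennreal ((norm (frl_est \<phi> \<tau> \<epsilon> X W0 n m \<omega> - \<mu>0))\<^sup>2) \<partial>M)
      \<le> ennreal (2 * (4 * \<tau>\<^sup>2 / real n) + tail + 2 * B\<^sup>2 * (2 * real m))"
    by (rule nn_integral_le_of_AE_le_combination[OF _ _ _ pointwise sample_mean_mse_le[OF n] noise])
      (use tail_nonneg in auto)
  also have "2 * (4 * \<tau>\<^sup>2 / real n) + tail + 2 * B\<^sup>2 * (2 * real m)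
      = 8 * \<tau>\<^sup>2 / real n + lam m powr \<eta> * C_eta_norm_sq + 16 * \<tau>\<^sup>2 * real m ^ 3 / ((real n)\<^sup>2 * \<epsilon>\<^sup>2)"
    using n \<epsilon> by (simp add: B_def tail_def power2_eq_square power3_eq_cube field_simps)
  finally show ?thesis .
qed


lemma frl_mse_rate:
  assumes W0: "\<And>j. distributed M lborel (W0 j) (\<lambda>x. ennreal (laplace_density 1 x))"
    and \<epsilon>: "\<epsilon> > 0" and \<eta>: "\<eta> > 0" and a: "a > 0" and b: "b > 0"
    and Ms: "\<forall>n\<ge>1. a * real n powr (1 / (\<eta> * \<beta>)) \<le> real (Ms n) \<and> real (Ms n) \<le> b * real n powr (1 / 3)"
  shows "\<exists>K. \<forall>n\<ge>1. ennreal (real n) *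
    (\<integral>\<^sup>+\<omega>. ennreal ((norm (frl_est \<phi> \<tau> \<epsilon> X W0 n (Ms n) \<omega> - \<mu>0))\<^sup>2) \<partial>M) \<le> ennreal K"
proof (intro exI allI impI)
  fix n :: nat assume n: "n \<ge> 1"
  define m where "m = Ms n"
  have bias: "real n * lam m powr \<eta> * C_eta_norm_sq \<le> c2 powr \<eta> * a powr (- \<beta> * \<eta>) * C_eta_norm_sq"
    using n_lam_powr_le[OF a \<eta> n] Ms n C_eta_norm_sq_nonneg by (intro mult_right_mono) (auto simp: m_def)
  have "real m ^ 3 / real n \<le> b ^ 3"
    using cube_le_of_le_cbrt[OF b n] Ms n n by (simp add: m_def divide_le_eq mult.commute)
  then have "16 * \<tau>\<^sup>2 / \<epsilon>\<^sup>2 * (real m ^ 3 / real n) \<le> 16 * \<tau>\<^sup>2 / \<epsilon>\<^sup>2 * b ^ 3"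
    by (intro mult_left_mono) auto
  moreover have "real n * (16 * \<tau>\<^sup>2 * real m ^ 3 / ((real n)\<^sup>2 * \<epsilon>\<^sup>2))
      = 16 * \<tau>\<^sup>2 / \<epsilon>\<^sup>2 * (real m ^ 3 / real n)"
    using n \<epsilon> by (simp add: power2_eq_square field_simps)
  ultimately have noise: "real n * (16 * \<tau>\<^sup>2 * real m ^ 3 / ((real n)\<^sup>2 * \<epsilon>\<^sup>2)) \<le> 16 * \<tau>\<^sup>2 / \<epsilon>\<^sup>2 * b ^ 3"
    by simp
  have "(\<integral>\<^sup>+\<omega>. ennreal ((norm (frl_est \<phi> \<tau> \<epsilon> X W0 n m \<omega> - \<mu>0))\<^sup>2) \<partial>M)
      \<le> ennreal (8 * \<tau>\<^sup>2 / real n + lam m powr \<eta> * C_eta_norm_sq + 16 * \<tau>\<^sup>2 * real m ^ 3 / ((real n)\<^sup>2 * \<epsilon>\<^sup>2))"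
    by (rule frl_mse_le[OF W0 \<eta> n \<epsilon>])
  then have "ennreal (real n) * (\<integral>\<^sup>+\<omega>. ennreal ((norm (frl_est \<phi> \<tau> \<epsilon> X W0 n m \<omega> - \<mu>0))\<^sup>2) \<partial>M)
      \<le> ennreal (real n * (8 * \<tau>\<^sup>2 / real n + lam m powr \<eta> * C_eta_norm_sq
          + 16 * \<tau>\<^sup>2 * real m ^ 3 / ((real n)\<^sup>2 * \<epsilon>\<^sup>2)))"
    using C_eta_norm_sq_nonneg by (subst ennreal_mult) (auto intro: mult_left_mono)
  also have "\<dots> \<le> ennreal (8 * \<tau>\<^sup>2 + c2 powr \<eta> * a powr (- \<beta> * \<eta>) * C_eta_norm_sq + 16 * \<tau>\<^sup>2 / \<epsilon>\<^sup>2 * b ^ 3)"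
    using bias noise n by (intro ennreal_leI) (simp add: distrib_left mult.assoc)
  finally show "ennreal (real n) * (\<integral>\<^sup>+\<omega>. ennreal ((norm (frl_est \<phi> \<tau> \<epsilon> X W0 n (Ms n) \<omega> - \<mu>0))\<^sup>2) \<partial>M)
      \<le> ennreal (8 * \<tau>\<^sup>2 + c2 powr \<eta> * a powr (- \<beta> * \<eta>) * C_eta_norm_sq + 16 * \<tau>\<^sup>2 / \<epsilon>\<^sup>2 * b ^ 3)"
    by (simp add: m_def)
qed


lemma
  assumes Z: "\<And>j. distributed M lborel (Z j) (\<lambda>x. ennreal (laplace_density (1 / sqrt 2) x))"
  shows nn_integral_noise_energy_le:
      "(\<integral>\<^sup>+\<omega>. (\<Sum>k. ennreal (lam k * (Z k \<omega>)\<^sup>2)) \<partial>M) \<le> ennreal (\<Sum>k. lam k)"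
    and AE_summable_noise_energy: "AE \<omega> in M. summable (\<lambda>k. lam k * (Z k \<omega>)\<^sup>2)"
proof -
  have [measurable]: "Z j \<in> borel_measurable M" for j
    using distributed_measurable[OF Z[of j]] by simp
  have Z_sq: "(\<integral>\<^sup>+\<omega>. ennreal ((Z j \<omega>)\<^sup>2) \<partial>M) \<le> 1" for j
    using laplace_second_moment_le[of "1 / sqrt 2", OF _ Z[of j]] by (simp add: power_divide)
  show "(\<integral>\<^sup>+\<omega>. (\<Sum>k. ennreal (lam k * (Z k \<omega>)\<^sup>2)) \<partial>M) \<le> ennreal (\<Sum>k. lam k)"
    by (rule nn_integral_weighted_sq_series_le[OF _ Z_sq]) (auto simp: less_imp_le lam_pos summable_lam)
  show "AE \<omega> in M. summable (\<lambda>k. lam k * (Z k \<omega>)\<^sup>2)"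
    by (rule AE_summable_weighted_sq[OF _ Z_sq]) (auto simp: less_imp_le lam_pos summable_lam)
qed

lemma iclp_mse_le:
  fixes \<psi> \<epsilon> :: real
  assumes Z: "\<And>j. distributed M lborel (Z j) (\<lambda>x. ennreal (laplace_density (1 / sqrt 2) x))"
    and \<psi>: "\<psi> > 0" and n: "n \<ge> 1"
  defines "\<sigma> \<equiv> sqrt 2 * delta_qr lam \<eta> \<psi> \<tau> n / \<epsilon>"
  shows "(\<integral>\<^sup>+\<omega>. ennreal ((norm (iclp_qr_est lam \<phi> \<eta> \<psi> \<tau> \<epsilon> X Z n \<omega> - \<mu>0))\<^sup>2) \<partial>M)
    \<le> ennreal (12 * \<tau>\<^sup>2 / real n + 3 * \<psi> * C_eta_norm_sq + 3 * \<sigma>\<^sup>2 * (\<Sum>k. lam k))"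
proof -
  have [measurable]: "Z j \<in> borel_measurable M" for j
    using distributed_measurable[OF Z[of j]] by simp
  have [measurable]: "Xbar X n \<in> borel_measurable M" unfolding Xbar_def by measurable
  have summable_noise: "AE \<omega> in M. summable (\<lambda>k. lam k * (Z k \<omega>)\<^sup>2)"
    by (rule AE_summable_noise_energy[OF Z])
  have noise: "(\<integral>\<^sup>+\<omega>. (\<Sum>k. ennreal (lam k * (Z k \<omega>)\<^sup>2)) \<partial>M) \<le> ennreal (\<Sum>k. lam k)"
    by (rule nn_integral_noise_energy_le[OF Z])
  have pointwise: "AE \<omega> in M. ennreal ((norm (iclp_qr_est lam \<phi> \<eta> \<psi> \<tau> \<epsilon> X Z n \<omega> - \<mu>0))\<^sup>2)
      \<le> ennreal (3 * (norm (Xbar X n \<omega> - \<mu>0))\<^sup>2) + ennreal (3 * \<psi> * C_eta_norm_sq)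
        + ennreal (3 * \<sigma>\<^sup>2) * (\<Sum>k. ennreal (lam k * (Z k \<omega>)\<^sup>2))"
    using summable_noise
  proof eventually_elim
    case (elim \<omega>)
    have "(norm (iclp_qr_est lam \<phi> \<eta> \<psi> \<tau> \<epsilon> X Z n \<omega> - \<mu>0))\<^sup>2
        \<le> 3 * (norm (Xbar X n \<omega> - \<mu>0))\<^sup>2 + 3 * \<psi> * C_eta_norm_sq + 3 * \<sigma>\<^sup>2 * (\<Sum>k. lam k * (Z k \<omega>)\<^sup>2)"
      unfolding iclp_qr_est_def qr_est_def iclp_noise_def \<sigma>_def C_eta_norm_sq_def
      by (rule norm_qr_plus_noise_sq_le[OF onb lam_pos \<psi> elim summable_C_eta])
    moreover have "0 \<le> (\<Sum>k. lam k * (Z k \<omega>)\<^sup>2)"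
      by (intro suminf_nonneg elim) (simp add: less_imp_le[OF lam_pos])
    ultimately show ?case
      using \<psi> C_eta_norm_sq_nonneg lam_pos
      by (simp add: suminf_ennreal2[OF _ elim] less_imp_le ennreal_mult[symmetric]
          ennreal_plus[symmetric] del: ennreal_plus)
  qed
  have "(\<integral>\<^sup>+\<omega>. ennreal ((norm (iclp_qr_est lam \<phi> \<eta> \<psi> \<tau> \<epsilon> X Z n \<omega> - \<mu>0))\<^sup>2) \<partial>M)
      \<le> ennreal (3 * (4 * \<tau>\<^sup>2 / real n) + 3 * \<psi> * C_eta_norm_sq + 3 * \<sigma>\<^sup>2 * (\<Sum>k. lam k))"
    by (rule nn_integral_le_of_AE_le_combination[OF _ _ _ pointwise sample_mean_mse_le[OF n] noise])
      (use \<psi> C_eta_norm_sq_nonneg summable_lam lam_pos in \<open>auto intro: suminf_nonneg less_imp_le\<close>)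
  then show ?thesis by simp
qed

lemma iclp_noise_mse_le:
  fixes \<psi> \<epsilon> :: real and n :: nat
  assumes Z: "\<And>j. distributed M lborel (Z j) (\<lambda>x. ennreal (laplace_density (1 / sqrt 2) x))"
  defines "\<sigma> \<equiv> sqrt 2 * delta_qr lam \<eta> \<psi> \<tau> n / \<epsilon>"
  shows "(\<integral>\<^sup>+\<omega>. ennreal ((norm (iclp_qr_est lam \<phi> \<eta> \<psi> \<tau> \<epsilon> X Z n \<omega> - qr_est lam \<phi> \<eta> \<psi> X n \<omega>))\<^sup>2) \<partial>M)
    \<le> ennreal (\<sigma>\<^sup>2 * (\<Sum>k. lam k))"
proof -
  have [measurable]: "Z j \<in> borel_measurable M" for j
    using distributed_measurable[OF Z[of j]] by simp
  have summable_noise: "AE \<omega> in M. summable (\<lambda>k. lam k * (Z k \<omega>)\<^sup>2)"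
    by (rule AE_summable_noise_energy[OF Z])
  have noise: "(\<integral>\<^sup>+\<omega>. (\<Sum>k. ennreal (lam k * (Z k \<omega>)\<^sup>2)) \<partial>M) \<le> ennreal (\<Sum>k. lam k)"
    by (rule nn_integral_noise_energy_le[OF Z])
  have "(\<integral>\<^sup>+\<omega>. ennreal ((norm (iclp_qr_est lam \<phi> \<eta> \<psi> \<tau> \<epsilon> X Z n \<omega> - qr_est lam \<phi> \<eta> \<psi> X n \<omega>))\<^sup>2) \<partial>M)
      = (\<integral>\<^sup>+\<omega>. ennreal (\<sigma>\<^sup>2) * (\<Sum>k. ennreal (lam k * (Z k \<omega>)\<^sup>2)) \<partial>M)"
    using summable_noise
  proof (rule nn_integral_cong_AE[OF eventually_mono])
    fix \<omega> assume summable: "summable (\<lambda>k. lam k * (Z k \<omega>)\<^sup>2)"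
    have "iclp_qr_est lam \<phi> \<eta> \<psi> \<tau> \<epsilon> X Z n \<omega> - qr_est lam \<phi> \<eta> \<psi> X n \<omega>
        = \<sigma> *\<^sub>R (\<Sum>k. (sqrt (lam k) * Z k \<omega>) *\<^sub>R \<phi> k)"
      by (simp add: iclp_qr_est_def iclp_noise_def \<sigma>_def)
    then have eq: "(norm (iclp_qr_est lam \<phi> \<eta> \<psi> \<tau> \<epsilon> X Z n \<omega> - qr_est lam \<phi> \<eta> \<psi> X n \<omega>))\<^sup>2
        = \<sigma>\<^sup>2 * (\<Sum>k. lam k * (Z k \<omega>)\<^sup>2)"
      using norm_noise_series_sq[OF onb _ summable] lam_pos by (simp add: power_mult_distrib less_imp_le)
    then show "ennreal ((norm (iclp_qr_est lam \<phi> \<eta> \<psi> \<tau> \<epsilon> X Z n \<omega> - qr_est lam \<phi> \<eta> \<psi> X n \<omega>))\<^sup>2)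
        = ennreal (\<sigma>\<^sup>2) * (\<Sum>k. ennreal (lam k * (Z k \<omega>)\<^sup>2))"
    proof -
      have "(\<Sum>k. ennreal (lam k * (Z k \<omega>)\<^sup>2)) = ennreal (\<Sum>k. lam k * (Z k \<omega>)\<^sup>2)"
        by (rule suminf_ennreal2[OF _ summable]) (simp add: less_imp_le[OF lam_pos])
      with eq show ?thesis by (simp add: ennreal_mult')
    qed
  qed
  also have "\<dots> = ennreal (\<sigma>\<^sup>2) * (\<integral>\<^sup>+\<omega>. (\<Sum>k. ennreal (lam k * (Z k \<omega>)\<^sup>2)) \<partial>M)"
    by (rule nn_integral_cmult) auto
  also have "\<dots> \<le> ennreal (\<sigma>\<^sup>2) * ennreal (\<Sum>k. lam k)"
    by (intro mult_left_mono noise) auto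
  finally show ?thesis by (simp add: ennreal_mult')
qed


lemma iclp_mse_rate:
  assumes Z: "\<And>j. distributed M lborel (Z j) (\<lambda>x. ennreal (laplace_density (1 / sqrt 2) x))"
    and \<epsilon>: "\<epsilon> > 0" and \<gamma>: "\<beta> * (\<eta> - 1/2) > 1" and a: "a > 0" and b: "b > 0"
    and \<psi>s: "\<forall>n\<ge>1. 0 < \<psi>s n \<and> \<psi>s n \<le> 1 \<and>
               a * (real n * \<epsilon>\<^sup>2) powr (- \<eta> * \<beta> / (\<beta> + 2)) \<le> \<psi>s n \<and> \<psi>s n \<le> b * real n powr (-1)"
  shows "\<exists>K. \<forall>n\<ge>1. ennreal (real n) *
    (\<integral>\<^sup>+\<omega>. ennreal ((norm (iclp_qr_est lam \<phi> \<eta> (\<psi>s n) \<tau> \<epsilon> X Z n \<omega> - \<mu>0))\<^sup>2) \<partial>M) \<le> ennreal K"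
proof (intro exI allI impI)
  fix n :: nat assume n: "n \<ge> 1"
  define \<psi> where "\<psi> = \<psi>s n"
  define \<sigma> where "\<sigma> = sqrt 2 * delta_qr lam \<eta> \<psi> \<tau> n / \<epsilon>"
  define E where "E = 2 * qr_sum_exponent \<eta>"
  have \<psi>: "0 < \<psi>" "\<psi> \<le> 1" "a * (real n * \<epsilon>\<^sup>2) powr (- (\<eta> * \<beta> / (\<beta> + 2))) \<le> \<psi>"
    "\<psi> \<le> b * real n powr (-1)"
    using \<psi>s n by (auto simp: \<psi>_def)
  have \<eta>: "\<eta> > 0" using eta_gt_half[OF \<gamma>] by simp
  have nx: "real n * \<epsilon>\<^sup>2 > 0" using n \<epsilon> by simp
  have E: "\<eta> * \<beta> / (\<beta> + 2) * E = 1" "E \<ge> 0"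
    using beta_gt \<eta> by (simp_all add: E_def qr_sum_exponent_def)
  have "\<psi> powr (- E) \<le> a powr (- E) * (real n * \<epsilon>\<^sup>2)"
    by (rule powr_neg_le_of_ge_powr[OF a nx \<psi>(3) E])
  then have "8 * \<tau>\<^sup>2 * (qr_sum_const \<eta>)\<^sup>2 * \<psi> powr (- E) / (real n * \<epsilon>\<^sup>2)
      \<le> 8 * \<tau>\<^sup>2 * (qr_sum_const \<eta>)\<^sup>2 * (a powr (- E) * (real n * \<epsilon>\<^sup>2)) / (real n * \<epsilon>\<^sup>2)"
    by (intro divide_right_mono mult_left_mono) auto
  also have "\<dots> = 8 * \<tau>\<^sup>2 * (qr_sum_const \<eta>)\<^sup>2 * a powr (- E)"
    using n \<epsilon> by simp
  finally have scale: "real n * \<sigma>\<^sup>2 \<le> 8 * \<tau>\<^sup>2 * (qr_sum_const \<eta>)\<^sup>2 * a powr (- E)"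
    using n_iclp_scale_sq_le[OF \<gamma> \<psi>(1,2) n \<epsilon>, of \<tau>] by (simp add: \<sigma>_def E_def)
  have "real n * \<psi> \<le> real n * (b * real n powr (-1))" using \<psi>(4) by (intro mult_left_mono) auto
  also have "\<dots> = b" using n by (simp add: powr_minus)
  finally have shrink: "real n * \<psi> \<le> b" .
  have "ennreal (real n) * (\<integral>\<^sup>+\<omega>. ennreal ((norm (iclp_qr_est lam \<phi> \<eta> \<psi> \<tau> \<epsilon> X Z n \<omega> - \<mu>0))\<^sup>2) \<partial>M)
      \<le> ennreal (real n) * ennreal (12 * \<tau>\<^sup>2 / real n + 3 * \<psi> * C_eta_norm_sq + 3 * \<sigma>\<^sup>2 * (\<Sum>k. lam k))"
    unfolding \<sigma>_def by (intro mult_left_mono iclp_mse_le[OF Z \<psi>(1) n]) auto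
  also have "\<dots> = ennreal (12 * \<tau>\<^sup>2 + 3 * (real n * \<psi>) * C_eta_norm_sq + 3 * (real n * \<sigma>\<^sup>2) * (\<Sum>k. lam k))"
  proof -
    have "real n * (12 * \<tau>\<^sup>2 / real n + 3 * \<psi> * C_eta_norm_sq + 3 * \<sigma>\<^sup>2 * (\<Sum>k. lam k))
        = 12 * \<tau>\<^sup>2 + 3 * (real n * \<psi>) * C_eta_norm_sq + 3 * (real n * \<sigma>\<^sup>2) * (\<Sum>k. lam k)"
      using n by (simp add: distrib_left)
    then show ?thesis by (simp add: ennreal_mult'[symmetric])
  qed
  also have "\<dots> \<le> ennreal (12 * \<tau>\<^sup>2 + 3 * b * C_eta_norm_sq
      + 3 * (8 * \<tau>\<^sup>2 * (qr_sum_const \<eta>)\<^sup>2 * a powr (- E)) * (\<Sum>k. lam k))"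
  proof (intro ennreal_leI add_mono order_refl)
    show "3 * (real n * \<psi>) * C_eta_norm_sq \<le> 3 * b * C_eta_norm_sq"
      using shrink C_eta_norm_sq_nonneg by (simp add: mult_right_mono)
    show "3 * (real n * \<sigma>\<^sup>2) * (\<Sum>k. lam k) \<le> 3 * (8 * \<tau>\<^sup>2 * (qr_sum_const \<eta>)\<^sup>2 * a powr (- E)) * (\<Sum>k. lam k)"
      using mult_right_mono[OF scale suminf_nonneg[OF summable_lam less_imp_le[OF lam_pos]]]
      by (simp add: mult_ac)
  qed
  finally show "ennreal (real n) *
      (\<integral>\<^sup>+\<omega>. ennreal ((norm (iclp_qr_est lam \<phi> \<eta> (\<psi>s n) \<tau> \<epsilon> X Z n \<omega> - \<mu>0))\<^sup>2) \<partial>M)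
    \<le> ennreal (12 * \<tau>\<^sup>2 + 3 * b * C_eta_norm_sq
      + 3 * (8 * \<tau>\<^sup>2 * (qr_sum_const \<eta>)\<^sup>2 * a powr (- E)) * (\<Sum>k. lam k))"
    by (simp add: \<psi>_def)
qed

lemma iclp_noise_mse_tendsto_zero:
  assumes Z: "\<And>j. distributed M lborel (Z j) (\<lambda>x. ennreal (laplace_density (1 / sqrt 2) x))"
    and \<epsilon>: "\<epsilon> > 0" and \<eta>: "\<beta> * \<eta> > \<beta> + 2"
  shows "(\<lambda>n. ennreal (real n) * (\<integral>\<^sup>+\<omega>. ennreal ((norm (iclp_qr_est lam \<phi> \<eta> (1 / real n) \<tau> \<epsilon> X Z n \<omega>
            - qr_est lam \<phi> \<eta> (1 / real n) X n \<omega>))\<^sup>2) \<partial>M)) \<longlonglongrightarrow> 0"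
proof -
  define E where "E = 2 * qr_sum_exponent \<eta>"
  define C where "C = 8 * \<tau>\<^sup>2 * (qr_sum_const \<eta>)\<^sup>2 / \<epsilon>\<^sup>2 * (\<Sum>k. lam k)"
  have \<gamma>: "\<beta> * (\<eta> - 1/2) > 1" using \<eta> beta_gt by (simp add: right_diff_distrib)
  have \<eta>0: "\<eta> > 0" using eta_gt_half[OF \<gamma>] by simp
  have E: "E - 1 < 0" using \<eta> beta_gt \<eta>0 by (simp add: E_def qr_sum_exponent_def field_simps)
  have bound: "ennreal (real n) * (\<integral>\<^sup>+\<omega>. ennreal ((norm (iclp_qr_est lam \<phi> \<eta> (1 / real n) \<tau> \<epsilon> X Z n \<omega>
            - qr_est lam \<phi> \<eta> (1 / real n) X n \<omega>))\<^sup>2) \<partial>M) \<le> ennreal (C * real n powr (E - 1))"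
    if n: "n \<ge> 1" for n
  proof -
    define \<sigma> where "\<sigma> = sqrt 2 * delta_qr lam \<eta> (1 / real n) \<tau> n / \<epsilon>"
    have \<psi>: "0 < 1 / real n" "1 / real n \<le> 1" using n by auto
    have "(1 / real n) powr (- E) = real n powr E"
      using n by (simp add: powr_divide powr_minus divide_inverse inverse_powr)
    then have "real n * \<sigma>\<^sup>2 \<le> 8 * \<tau>\<^sup>2 * (qr_sum_const \<eta>)\<^sup>2 * real n powr E / (real n * \<epsilon>\<^sup>2)"
      using n_iclp_scale_sq_le[OF \<gamma> \<psi> n \<epsilon>, of \<tau>] by (simp add: \<sigma>_def E_def)
    also have "\<dots> = 8 * \<tau>\<^sup>2 * (qr_sum_const \<eta>)\<^sup>2 / \<epsilon>\<^sup>2 * real n powr (E - 1)"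
      using n by (simp add: powr_diff)
    finally have "real n * \<sigma>\<^sup>2 * (\<Sum>k. lam k)
        \<le> 8 * \<tau>\<^sup>2 * (qr_sum_const \<eta>)\<^sup>2 / \<epsilon>\<^sup>2 * real n powr (E - 1) * (\<Sum>k. lam k)"
      using suminf_nonneg[OF summable_lam less_imp_le[OF lam_pos]] by (rule mult_right_mono)
    then have scale: "real n * \<sigma>\<^sup>2 * (\<Sum>k. lam k) \<le> C * real n powr (E - 1)"
      by (simp add: C_def mult_ac)
    have "ennreal (real n) * (\<integral>\<^sup>+\<omega>. ennreal ((norm (iclp_qr_est lam \<phi> \<eta> (1 / real n) \<tau> \<epsilon> X Z n \<omega>
            - qr_est lam \<phi> \<eta> (1 / real n) X n \<omega>))\<^sup>2) \<partial>M) \<le> ennreal (real n) * ennreal (\<sigma>\<^sup>2 * (\<Sum>k. lam k))"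
      unfolding \<sigma>_def by (intro mult_left_mono iclp_noise_mse_le[OF Z]) auto
    also have "\<dots> \<le> ennreal (C * real n powr (E - 1))"
      using scale by (simp add: ennreal_mult'[symmetric] mult.assoc ennreal_leI)
    finally show ?thesis .
  qed
  have "(\<lambda>n. C * real n powr (E - 1)) \<longlonglongrightarrow> C * 0"
    by (intro tendsto_mult tendsto_const tendsto_neg_powr[OF E filterlim_real_sequentially])
  then have lim: "(\<lambda>n. ennreal (C * real n powr (E - 1))) \<longlonglongrightarrow> 0"
    using tendsto_ennrealI by fastforce
  show ?thesis
  proof (rule tendsto_sandwich[OF _ _ tendsto_const lim])
    show "\<forall>\<^sub>F n in sequentially. ennreal (real n) * (\<integral>\<^sup>+\<omega>. ennreal ((norm (iclp_qr_est lam \<phi> \<eta> (1 / real n) \<tau> \<epsilon> X Z n \<omega>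
            - qr_est lam \<phi> \<eta> (1 / real n) X n \<omega>))\<^sup>2) \<partial>M) \<le> ennreal (C * real n powr (E - 1))"
      using eventually_ge_at_top[of 1] by eventually_elim (rule bound)
  qed simp
qed

end

theorem corollary1:
  fixes M :: "'w measure"
    and X :: "nat \<Rightarrow> 'w \<Rightarrow> 'a::{real_inner, banach, second_countable_topology}"
    and W0 Z :: "nat \<Rightarrow> 'w \<Rightarrow> real"
    and \<mu>0 :: 'a and \<phi> :: "nat \<Rightarrow> 'a" and lam :: "nat \<Rightarrow> real"
    and \<tau> \<beta> \<eta> c1 c2 \<epsilon> :: real
  assumes prob: "prob_space M"
    and X_rv: "\<And>i. X i \<in> borel_measurable M"
    and X_indep: "prob_space.indep_vars M (\<lambda>_. borel) X UNIV"
    and X_ident: "\<And>i. distr M borel (X i) = distr M borel (X 0)"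
    and X_int: "integrable M (X 0)"
    and X_mean: "(\<integral>\<omega>. X 0 \<omega> \<partial>M) = \<mu>0"
    and X_bdd: "AE \<omega> in M. norm (X 0 \<omega>) \<le> \<tau>"
    and tau_pos: "\<tau> > 0"
    and W0_distr: "\<And>j. distributed M lborel (W0 j) (\<lambda>x. ennreal (laplace_density 1 x))"
    and W0_indep: "prob_space.indep_vars M (\<lambda>_. borel) W0 UNIV"
    and W0_X_indep: "indep_processes M X W0"
    and Z_distr: "\<And>j. distributed M lborel (Z j) (\<lambda>x. ennreal (laplace_density (1 / sqrt 2) x))"
    and Z_indep: "prob_space.indep_vars M (\<lambda>_. borel) Z UNIV"
    and Z_X_indep: "indep_processes M X Z"
    and onb: "orthonormal_basis \<phi>"
    and lam_pos: "\<And>j. lam j > 0"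
    and lam_mono: "\<And>j. lam (Suc j) \<le> lam j"
    and beta_gt: "\<beta> > 1"
    and c1_pos: "c1 > 0" and c2_pos: "c2 > 0"
    and lam_lower: "\<And>j. c1 * real (Suc j) powr (- \<beta>) \<le> lam j"
    and lam_upper: "\<And>j. lam j \<le> c2 * real (Suc j) powr (- \<beta>)"
    and mu0_reg: "in_H_C_pow lam \<phi> \<eta> \<mu>0"
    and eps_pos: "\<epsilon> > 0"
  shows
    "(\<forall>(Ms :: nat \<Rightarrow> nat) a b.
        \<eta> > 1 + 1 / \<beta> \<and> a > 0 \<and> b > 0 \<and>
        (\<forall>n\<ge>1. a * real n powr (1 / (\<eta> * \<beta>)) \<le> real (Ms n) \<and>
                 real (Ms n) \<le> b * real n powr (1 / 3))
      \<longrightarrow> (\<exists>K::real. \<forall>n\<ge>1.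
             ennreal (real n) * (\<integral>\<^sup>+\<omega>. ennreal ((norm (frl_est \<phi> \<tau> \<epsilon> X W0 n (Ms n) \<omega> - \<mu>0))\<^sup>2) \<partial>M)
               \<le> ennreal K))
   \<and> (\<forall>(\<psi>s :: nat \<Rightarrow> real) a b.
        \<eta> \<ge> 1 + 2 / \<beta> \<and> a > 0 \<and> b > 0 \<and>
        (\<forall>n\<ge>1. 0 < \<psi>s n \<and> \<psi>s n \<le> 1 \<and>
                 a * (real n * \<epsilon>\<^sup>2) powr (- \<eta> * \<beta> / (\<beta> + 2)) \<le> \<psi>s n \<and>
                 \<psi>s n \<le> b * real n powr (-1))
      \<longrightarrow> (\<exists>K::real. \<forall>n\<ge>1.
             ennreal (real n) * (\<integral>\<^sup>+\<omega>. ennreal ((norm (iclp_qr_est lam \<phi> \<eta> (\<psi>s n) \<tau> \<epsilon> X Z n \<omega> - \<mu>0))\<^sup>2) \<partial>M)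
               \<le> ennreal K))
   \<and> (\<eta> > 1 + 2 / \<beta> \<longrightarrow>
        (\<lambda>n. ennreal (real n) *
            (\<integral>\<^sup>+\<omega>. ennreal ((norm (iclp_qr_est lam \<phi> \<eta> (1 / real n) \<tau> \<epsilon> X Z n \<omega>
                                     - qr_est lam \<phi> \<eta> (1 / real n) X n \<omega>))\<^sup>2) \<partial>M))
        \<longlonglongrightarrow> 0)"
proof -
  \<comment> \<open>Only second moments of the noise enter the bounds.\<close>
  interpret prob_space M by (rule prob)
  interpret private_mean_setting M X \<mu>0 \<tau> \<phi> lam \<beta> c1 c2 \<eta>
    by unfold_locales (fact assms)+
  have \<eta>_frl: "\<eta> > 0" if "\<eta> > 1 + 1 / \<beta>"
    using that beta_gt divide_pos_pos[of 1 \<beta>] by linarith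
  have \<eta>_iclp: "\<beta> * (\<eta> - 1/2) > 1" if "\<eta> \<ge> 1 + 2 / \<beta>"
    using that beta_gt by (simp add: field_simps)
  have \<eta>_iclp_strict: "\<beta> * \<eta> > \<beta> + 2" if "\<eta> > 1 + 2 / \<beta>"
    using that beta_gt by (simp add: field_simps)
  show ?thesis
  proof ((intro conjI allI impI; (elim conjE)?), goal_cases)
    case (1 Ms a b)
    show ?case by (rule frl_mse_rate[OF _ eps_pos \<eta>_frl[OF 1(1)] 1(2-4)]) (rule W0_distr)
  next
    case (2 \<psi>s a b)
    show ?case by (rule iclp_mse_rate[OF _ eps_pos \<eta>_iclp[OF 2(1)] 2(2-4)]) (rule Z_distr)
  next
    case 3
    show ?case by (rule iclp_noise_mse_tendsto_zero[OF _ eps_pos \<eta>_iclp_strict[OF 3]]) (rule Z_distr)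
  qed
qed

end
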